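(* Let $\rho\in(0,1/4)$, $\phi:(0,1)\to\mathbb{R}_+$, $\alpha\geqslant0$, and let $\{\psi_t\}_{t\geqslant0}$ be a preconditioned first-order method with $(\rho,\phi(\rho),\alpha)$-linear convergence. Fix $\delta\in(0,1)$ and a random embedding with critical sketch size $m_\delta$. Run the following adaptive algorithm with inputs $\rho$, $\{\psi_t\}$, an initial sketch size $m_{\mathrm{init}}\geqslant1$, an initial point $x_0$ and an iteration number $T\geqslant0$: initialize $t=0$, $I=0$, $m_0=m_{\mathrm{init}}$; sample $S_0\in\mathbb{R}^{m_0\times n}$ from the embedding and compute $\widetilde\delta_I=\frac12\nabla f(x_0)^\top H_{S_0}^{-1}\nabla f(x_0)$; while $t<T$: compute $x^+=\psi_{t-I}(x_I,\dots,x_t;H_{S_t})$ and $\widetilde\delta^+=\frac12\nabla f(x^+)^\top H_{S_t}^{-1}\nabla f(x^+)$; if $\widetilde\delta^+/\widetilde\delta_I>c(\alpha,\rho)\,\phi(\rho)^{t+1-I}$, then set $I=t$, replace $m_t$ by $2m_t$, sample a new independent $S_t\in\mathbb{R}^{m_t\times n}$ from the embedding and recompute $\widetilde\delta_I=\frac12\nabla f(x_t)^\top H_{S_t}^{-1}\nabla f(x_t)$; otherwise set $x_{t+1}=x^+$, $m_{t+1}=m_t$, $S_{t+1}=S_t$ and $t\leftarrow t+1$. Here $c(\alpha,\rho)=\frac{1+\sqrt\rho}{1-\sqrt\rho}\,\alpha$, $m_t$ denotes the sketch size in use on the time interval $(t,t+1)$ (after any increases performed at time $t$), and $K_t$ denotes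 the number of times the sketch size has been increased up to time $t$. Then, for any $m_{\mathrm{init}}\geqslant1$, with probability at least $1-(1+K_{\max})\delta$, simultaneously for all $t\geqslant0$: $m_t\leqslant\max\{m_{\mathrm{init}},2m_\delta/\rho\}$, $K_t\leqslant K_{\max}$, and $$\frac{\delta_t}{\delta_0}\leqslant\alpha\,\phi(\rho)^t\Big(c(\alpha,\rho)\,\frac{\sigma_1^2+\nu^2}{\nu^2}\Big)^{K_{\max}}2^{K_{\max}^2},$$ where $K_{\max}=\big\lceil\log_2\big(\tfrac{m_\delta}{m_{\mathrm{init}}\rho}\big)_+\big\rceil$ and $\sigma_1$ is the largest singular value of $A$.
   Context: Let $A\in\mathbb{R}^{n\times d}$ with $n\geqslant d$, $b\in\mathbb{R}^d$, $\Lambda\in\mathbb{R}^{d\times d}$ diagonal with $\Lambda\succeq I_d$, and $\nu>0$. Set $H=A^\top A+\nu^2\Lambda$, $f(x)=\frac12 x^\top Hx-b^\top x$, $x^*=H^{-1}b$, and $\delta_t=\frac12\|x_t-x^*\|_H^2$ with $\|z\|_H^2=z^\top Hz$. For $S\in\mathbb{R}^{m\times n}$ set $H_S=A^\top S^\top SA+\nu^2\Lambda$ and $C_S=H^{-1/2}H_SH^{-1/2}$. For $\rho>0$, $\mathcal{E}^m_\rho$ is the event $\|C_S-I_d\|_2\leqslant\max\{\sqrt\rho,\rho\}$. A random embedding is a family of distributions of random matrices $S\in\mathbb{R}^{m\times n}$, one for each $m\geqslant1$; given $\delta\in(0,1)$, its critical sketch size is $m_\delta=\inf\{k\geqslant1:\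 \mathbb{P}(\mathcal{E}^m_\rho)\geqslant1-\delta \text{ for all }\rho>0\text{ and all } m\geqslant k/\rho\}$. A preconditioned first-order method is a sequence of functions $\{\psi_t\}_{t\geqslant0}$ such that for any $P\succ0$ and $x_0\in\mathbb{R}^d$ the iterates $x_{t+1}=\psi_t(x_0,\dots,x_t;P)$ satisfy $x_{t+1}\in x_0+P^{-1}\mathrm{span}\{\nabla f(x_0),\dots,\nabla f(x_t)\}$; it has $(\rho,\phi(\rho),\alpha)$-linear convergence if for all $x_0$, $m\geqslant1$, $S\in\mathbb{R}^{m\times n}$ with $\|C_S-I_d\|_2\leqslant\max\{\sqrt\rho,\rho\}$, the iterates $x_{t+1}=\psi_t(x_0,\dots,x_t;H_S)$ satisfy $\delta_t\leqslant\alpha\phi(\rho)^t\delta_0$ for all $t\geqslant0$. *)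

theory Defs
  imports "HOL-Analysis.Analysis" "HOL-Probability.Probability"
begin

definition Hmat :: "real^'d^'n \<Rightarrow> real^'d^'d \<Rightarrow> real \<Rightarrow> real^'d^'d" where
  "Hmat A \<Lambda> \<nu> = transpose A ** A + (\<nu>^2) *\<^sub>R \<Lambda>"

text \<open>A sketching matrix S in R^{m x n} is represented by its rows S 0, ..., S (m-1) in R^n
  (rows with index >= m are ignored).  sketch_gram m S is S^T S.\<close>

definition sketch_gram :: "nat \<Rightarrow> (nat \<Rightarrow> real^'n) \<Rightarrow> real^'n^'n" where
  "sketch_gram m S = (\<chi> j k. \<Sum>i<m. S i $ j * S i $ k)"

definition HSmat :: "real^'d^'n \<Rightarrow> real^'d^'d \<Rightarrow> real \<Rightarrow> nat \<Rightarrow> (nat \<Rightarrow> real^'n) \<Rightarrow> real^'d^'d" where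
  "HSmat A \<Lambda> \<nu> m S = transpose A ** sketch_gram m S ** A + (\<nu>^2) *\<^sub>R \<Lambda>"

definition fobj :: "real^'d^'n \<Rightarrow> real^'d \<Rightarrow> real^'d^'d \<Rightarrow> real \<Rightarrow> real^'d \<Rightarrow> real" where
  "fobj A b \<Lambda> \<nu> x = 1/2 * (x \<bullet> (Hmat A \<Lambda> \<nu> *v x)) - b \<bullet> x"

definition grad_f :: "real^'d^'n \<Rightarrow> real^'d \<Rightarrow> real^'d^'d \<Rightarrow> real \<Rightarrow> real^'d \<Rightarrow> real^'d" where
  "grad_f A b \<Lambda> \<nu> x = Hmat A \<Lambda> \<nu> *v x - b"

definition xstar :: "real^'d^'n \<Rightarrow> real^'d \<Rightarrow> real^'d^'d \<Rightarrow> real \<Rightarrow> real^'d" where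
  "xstar A b \<Lambda> \<nu> = matrix_inv (Hmat A \<Lambda> \<nu>) *v b"

definition subopt :: "real^'d^'n \<Rightarrow> real^'d \<Rightarrow> real^'d^'d \<Rightarrow> real \<Rightarrow> real^'d \<Rightarrow> real" where
  "subopt A b \<Lambda> \<nu> x = 1/2 * ((x - xstar A b \<Lambda> \<nu>) \<bullet> (Hmat A \<Lambda> \<nu> *v (x - xstar A b \<Lambda> \<nu>)))"

definition psd_sqrt :: "real^'d^'d \<Rightarrow> real^'d^'d" where
  "psd_sqrt M = (THE R. transpose R = R \<and> (\<forall>x. 0 \<le> x \<bullet> (R *v x)) \<and> R ** R = M)"

definition spec_norm :: "real^'d^'e \<Rightarrow> real" where
  "spec_norm M = onorm (\<lambda>x. M *v x)"

definition CSmat :: "real^'d^'n \<Rightarrow> real^'d^'d \<Rightarrow> real \<Rightarrow> nat \<Rightarrow> (nat \<Rightarrow> real^'n) \<Rightarrow> real^'d^'d" where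
  "CSmat A \<Lambda> \<nu> m S = matrix_inv (psd_sqrt (Hmat A \<Lambda> \<nu>)) ** HSmat A \<Lambda> \<nu> m S
      ** matrix_inv (psd_sqrt (Hmat A \<Lambda> \<nu>))"

definition sketch_event :: "real^'d^'n \<Rightarrow> real^'d^'d \<Rightarrow> real \<Rightarrow> real \<Rightarrow> nat \<Rightarrow> (nat \<Rightarrow> real^'n) \<Rightarrow> bool" where
  "sketch_event A \<Lambda> \<nu> \<rho> m S \<longleftrightarrow> spec_norm (CSmat A \<Lambda> \<nu> m S - mat 1) \<le> max (sqrt \<rho>) \<rho>"

text \<open>Random embedding: D m is the distribution of the m x n sketch (as rows).
  Critical sketch size m_delta = inf of the set below.\<close>

definition crit_set :: "real^'d^'n \<Rightarrow> real^'d^'d \<Rightarrow> real \<Rightarrow> (nat \<Rightarrow> (nat \<Rightarrow> real^'n) measure) \<Rightarrow> real \<Rightarrow> nat set" where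
  "crit_set A \<Lambda> \<nu> D \<delta> = {k. k \<ge> 1 \<and> (\<forall>\<rho>>0. \<forall>m::nat. m \<ge> 1 \<and> real m \<ge> real k / \<rho> \<longrightarrow>
      measure (D m) {S \<in> space (D m). sketch_event A \<Lambda> \<nu> \<rho> m S} \<ge> 1 - \<delta>)}"

definition crit_size :: "real^'d^'n \<Rightarrow> real^'d^'d \<Rightarrow> real \<Rightarrow> (nat \<Rightarrow> (nat \<Rightarrow> real^'n) measure) \<Rightarrow> real \<Rightarrow> nat" where
  "crit_size A \<Lambda> \<nu> D \<delta> = Inf (crit_set A \<Lambda> \<nu> D \<delta>)"

type_synonym 'd pfom = "nat \<Rightarrow> (real^'d) list \<Rightarrow> real^'d^'d \<Rightarrow> real^'d"

fun pfom_list :: "'d pfom \<Rightarrow> real^'d^'d \<Rightarrow> real^'d \<Rightarrow> nat \<Rightarrow> (real^'d) list" where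
  "pfom_list \<psi> P x0 0 = [x0]"
| "pfom_list \<psi> P x0 (Suc t) = pfom_list \<psi> P x0 t @ [\<psi> t (pfom_list \<psi> P x0 t) P]"

definition pos_def :: "real^'d^'d \<Rightarrow> bool" where
  "pos_def P \<longleftrightarrow> transpose P = P \<and> (\<forall>x. x \<noteq> 0 \<longrightarrow> 0 < x \<bullet> (P *v x))"

definition is_pfom :: "real^'d^'n \<Rightarrow> real^'d \<Rightarrow> real^'d^'d \<Rightarrow> real \<Rightarrow> 'd pfom \<Rightarrow> bool" where
  "is_pfom A b \<Lambda> \<nu> \<psi> \<longleftrightarrow> (\<forall>P x0 t. pos_def P \<longrightarrow>
     pfom_list \<psi> P x0 (Suc t) ! Suc t \<in>
       (\<lambda>v. x0 + matrix_inv P *v v) ` span (grad_f A b \<Lambda> \<nu> ` set (pfom_list \<psi> P x0 t)))"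

definition lin_conv :: "real^'d^'n \<Rightarrow> real^'d \<Rightarrow> real^'d^'d \<Rightarrow> real \<Rightarrow> 'd pfom \<Rightarrow> real \<Rightarrow> real \<Rightarrow> real \<Rightarrow> bool" where
  "lin_conv A b \<Lambda> \<nu> \<psi> \<rho> r \<alpha> \<longleftrightarrow> (\<forall>x0 m S t. m \<ge> 1 \<longrightarrow> sketch_event A \<Lambda> \<nu> \<rho> m S \<longrightarrow>
     subopt A b \<Lambda> \<nu> (pfom_list \<psi> (HSmat A \<Lambda> \<nu> m S) x0 t ! t) \<le> \<alpha> * r ^ t * subopt A b \<Lambda> \<nu> x0)"

text \<open>The adaptive algorithm.  omega k is the k-th independently sampled sketch, of size m_init * 2^k.
  State (t, I, k, [x_0..x_t], tilde-delta_I), k = number of sketch-size increases so far.\<close>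

definition dtil :: "real^'d^'n \<Rightarrow> real^'d \<Rightarrow> real^'d^'d \<Rightarrow> real \<Rightarrow> real^'d^'d \<Rightarrow> real^'d \<Rightarrow> real" where
  "dtil A b \<Lambda> \<nu> P x = 1/2 * (grad_f A b \<Lambda> \<nu> x \<bullet> (matrix_inv P *v grad_f A b \<Lambda> \<nu> x))"

type_synonym 'd alg_state = "nat \<times> nat \<times> nat \<times> (real^'d) list \<times> real"

definition alg_step :: "real^'d^'n \<Rightarrow> real^'d \<Rightarrow> real^'d^'d \<Rightarrow> real \<Rightarrow> 'd pfom \<Rightarrow> real \<Rightarrow> real
    \<Rightarrow> nat \<Rightarrow> (nat \<Rightarrow> nat \<Rightarrow> real^'n) \<Rightarrow> nat \<Rightarrow> 'd alg_state \<Rightarrow> 'd alg_state" where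
  "alg_step A b \<Lambda> \<nu> \<psi> c r m_init \<omega> T st = (case st of (t, I, k, xs, dI) \<Rightarrow>
     if t < T then
       (let P = HSmat A \<Lambda> \<nu> (m_init * 2^k) (\<omega> k);
            xp = \<psi> (t - I) (drop I xs) P;
            dp = dtil A b \<Lambda> \<nu> P xp
        in if dp / dI > c * r ^ (t + 1 - I)
           then (t, t, Suc k, xs,
                 dtil A b \<Lambda> \<nu> (HSmat A \<Lambda> \<nu> (m_init * 2^(Suc k)) (\<omega> (Suc k))) (xs ! t))
           else (Suc t, I, k, xs @ [xp], dI))
     else st)"

definition alg_run :: "real^'d^'n \<Rightarrow> real^'d \<Rightarrow> real^'d^'d \<Rightarrow> real \<Rightarrow> 'd pfom \<Rightarrow> real \<Rightarrow> real
    \<Rightarrow> nat \<Rightarrow> (nat \<Rightarrow> nat \<Rightarrow> real^'n) \<Rightarrow> nat \<Rightarrow> real^'d \<Rightarrow> nat \<Rightarrow> 'd alg_state" where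
  "alg_run A b \<Lambda> \<nu> \<psi> c r m_init \<omega> T x0 j =
     (alg_step A b \<Lambda> \<nu> \<psi> c r m_init \<omega> T ^^ j)
       (0, 0, 0, [x0], dtil A b \<Lambda> \<nu> (HSmat A \<Lambda> \<nu> m_init (\<omega> 0)) x0)"

definition sigma_max :: "real^'d^'n \<Rightarrow> real" where
  "sigma_max A = sqrt (Max {l. \<exists>v. v \<noteq> 0 \<and> (transpose A ** A) *v v = l *\<^sub>R v})"

definition c_const :: "real \<Rightarrow> real \<Rightarrow> real" where
  "c_const \<alpha> \<rho> = (1 + sqrt \<rho>) / (1 - sqrt \<rho>) * \<alpha>"

end

(*
  Let K be the number of doublings after which the sketch size m_init 2^K reaches m_delta / rho.
  By the definition of m_delta and a union bound over the independent sketches of the levels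
  0, ..., K, with probability at least 1 - (1 + K) delta the sketch of level k is a
  max(rho, m_delta / (m_init 2^k))-embedding for every k <= K.  On this event the sketch of
  level K is a rho-embedding, so the estimated gaps are within the factors 1 -+ sqrt rho of the
  true ones and the linear convergence of psi keeps the restart test from ever firing there:
  at most K restarts happen.  On a level k < K the embedding still gives H_S <= 2^K H, and
  always H <= kappa H_S with kappa = (sigma_1^2 + nu^2) / nu^2; hence a step that passes the test
  decreases the true gap at the prescribed rate up to the factor 2^K c kappa.  Every restart costs
  at most this factor once, so delta_t <= alpha phi(rho)^t (2^K c kappa)^K delta_0.
*)

theory Submission
  imports Defs
begin

lemma divide_le_if_le_mult:
  fixes n d q :: real
  assumes "0 \<le> d" and "0 \<le> q" and "n \<le> q * d"
  shows "n / d \<le> q"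
  using assms by (cases "d = 0") (simp_all add: pos_divide_le_eq)

lemma one_le_mult:
  fixes a b :: real
  shows "1 \<le> a \<Longrightarrow> 1 \<le> b \<Longrightarrow> 1 \<le> a * b"
  using mult_mono[of 1 a 1 b] by simp

lemma le_mult_if_one_le:
  fixes a x :: real
  shows "1 \<le> a \<Longrightarrow> 0 \<le> x \<Longrightarrow> x \<le> a * x"
  by (simp add: mult_le_cancel_right1)

lemma linear_coeff_zero_if_quadratic_nonpos:
  fixes a b :: real
  assumes "\<And>t. 2 * t * a + t^2 * b \<le> 0" and "a \<ge> 0"
  shows "a = 0"
proof (rule ccontr)
  assume "a \<noteq> 0"
  with \<open>a \<ge> 0\<close> have "a > 0" by simp
  define t where "t = a / (\<bar>b\<bar> + 1)"
  have t: "t > 0" "t * (\<bar>b\<bar> + 1) = a"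
    using \<open>a > 0\<close> by (auto simp: t_def field_simps)
  have "t * b \<ge> - t * \<bar>b\<bar>"
    using t(1) mult_left_mono[of "- \<bar>b\<bar>" b t] by simp
  then have "2 * a + t * b > 0"
    using t \<open>a > 0\<close> by (simp add: algebra_simps)
  then have "2 * t * a + t^2 * b > 0"
    using t(1) mult_pos_pos[of t "2 * a + t * b"] by (simp add: power2_eq_square algebra_simps)
  with assms(1)[of t] show False by simp
qed

lemma one_plus_max_sqrt_le:
  fixes a N :: real
  assumes "a \<le> N / 4" and "2 \<le> N"
  shows "1 + max (sqrt a) a \<le> N"
proof (cases "a \<le> 1")
  case True
  then have "max (sqrt a) a \<le> 1"
    by simp
  with \<open>2 \<le> N\<close> show ?thesis
    by linarith
next
  case False
  then have "sqrt a \<le> sqrt a * sqrt a"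
    by (intro le_mult_if_one_le) auto
  with False have "max (sqrt a) a = a"
    by simp
  with assms show ?thesis
    by linarith
qed

lemma ceiling_log2_bounds:
  fixes x :: real
  assumes "0 < x"
  defines "K \<equiv> nat \<lceil>max 0 (log 2 x)\<rceil>"
  shows "x \<le> 2^K" and "1 \<le> K \<Longrightarrow> 2^K < 2 * x"
proof -
  have K: "real K = of_int \<lceil>max 0 (log 2 x)\<rceil>"
    unfolding K_def by simp
  have "log 2 x \<le> real K"
    unfolding K by (meson ceiling_correct max.cobounded2 order_trans)
  then show "x \<le> 2^K"
    using assms(1) by (simp add: log_le_iff powr_realpow)
  assume "1 \<le> K"
  then have "max 0 (log 2 x) = log 2 x"
    unfolding K_def by (auto simp: max_def split: if_splits)
  then have "real K - 1 < log 2 x"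
    using K ceiling_correct[of "log 2 x"] by simp
  then have "2 powr real K / 2 < x"
    using assms(1) by (simp add: less_log_iff powr_diff)
  then show "2^K < 2 * x"
    by (simp add: powr_realpow)
qed

section \<open>Symmetric matrices\<close>

lemma inner_vector_matrix_mult:
  fixes A :: "real^'d^'n"
  shows "x \<bullet> (w v* A) = (A *v x) \<bullet> w"
  by (metis dot_lmul_matrix inner_commute)

lemma transpose_add: "transpose (M + N) = transpose M + transpose (N :: 'a::semiring_1^'n^'m)"
  by (simp add: transpose_def vec_eq_iff)

lemma symmetric_matrix_iff_inner:
  fixes M :: "real^'n^'n"
  shows "transpose M = M \<longleftrightarrow> (\<forall>x y. (M *v x) \<bullet> y = x \<bullet> (M *v y))"
proof
  assume "transpose M = M"
  then have "M *v x = x v* M" for x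
    by (metis transpose_matrix_vector)
  then show "\<forall>x y. (M *v x) \<bullet> y = x \<bullet> (M *v y)"
    by (simp add: dot_lmul_matrix)
next
  assume inner: "\<forall>x y. (M *v x) \<bullet> y = x \<bullet> (M *v y)"
  have "M $ j $ i = M $ i $ j" for i j
    using inner[rule_format, of "axis i 1" "axis j 1"]
    by (simp add: matrix_vector_mul_component inner_axis inner_axis' inner_commute)
  then show "transpose M = M"
    by (simp add: transpose_def vec_eq_iff)
qed

lemma symmetric_matrix_inner:
  fixes M :: "real^'n^'n"
  shows "transpose M = M \<Longrightarrow> (M *v x) \<bullet> y = x \<bullet> (M *v y)"
  by (simp add: symmetric_matrix_iff_inner)

lemma diagonal_matrix_symmetric:
  fixes \<Lambda> :: "'a::zero^'n^'n"
  assumes "\<forall>i j. i \<noteq> j \<longrightarrow> \<Lambda> $ i $ j = 0"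
  shows "transpose \<Lambda> = \<Lambda>"
proof -
  have "\<Lambda> $ j $ i = \<Lambda> $ i $ j" for i j
    using assms by (cases "i = j") auto
  then show ?thesis
    by (simp add: transpose_def vec_eq_iff)
qed

lemma gram_matrix_quadratic_form:
  fixes A :: "real^'d^'n"
  shows "x \<bullet> ((transpose A ** A) *v x) = (A *v x) \<bullet> (A *v x)"
proof -
  have "(transpose A ** A) *v x = (A *v x) v* A"
    by (simp add: matrix_vector_mul_assoc[symmetric])
  then show ?thesis
    by (simp add: inner_vector_matrix_mult)
qed

lemma matrix_mult_vector_sum:
  fixes M :: "real^'n^'m"
  shows "M *v (\<Sum>i\<in>S. f i) = (\<Sum>i\<in>S. M *v f i)"
  by (induction S rule: infinite_finite_induct) (simp_all add: matrix_vector_right_distrib)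

lemma UNIV_not_singleton_0: "(UNIV :: (real^'n) set) \<noteq> {0}"
proof -
  have "axis undefined (1::real) \<notin> {0 :: real^'n}"
    by (simp add: axis_eq_0_iff)
  then show ?thesis
    by blast
qed

lemma quadratic_form_max_on_subspace:
  fixes M :: "real^'n^'n"
  assumes V: "subspace V" "V \<noteq> {0}"
  obtains u where "u \<in> V" "norm u = 1" "\<And>x. x \<in> V \<Longrightarrow> x \<bullet> (M *v x) \<le> (u \<bullet> (M *v u)) * (x \<bullet> x)"
proof -
  define S where "S = V \<inter> sphere 0 1"
  obtain v where v: "v \<in> V" "v \<noteq> 0"
    using V subspace_0 by blast
  have "compact S"
    unfolding S_def by (intro closed_Int_compact closed_subspace V compact_sphere)
  moreover have "v /\<^sub>R norm v \<in> S"
    using v V by (auto simp: S_def subspace_scale)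
  moreover have "continuous_on S (\<lambda>x. x \<bullet> (M *v x))"
    by (intro continuous_on_inner continuous_on_id linear_continuous_on
        matrix_vector_mul_bounded_linear)
  ultimately obtain u where u: "u \<in> S" and umax: "\<And>y. y \<in> S \<Longrightarrow> y \<bullet> (M *v y) \<le> u \<bullet> (M *v u)"
    using continuous_attains_sup[of S "\<lambda>x. x \<bullet> (M *v x)"] by blast
  have "x \<bullet> (M *v x) \<le> (u \<bullet> (M *v u)) * (x \<bullet> x)" if "x \<in> V" for x
  proof (cases "x = 0")
    case False
    have "x /\<^sub>R norm x \<in> S"
      using that False V by (auto simp: S_def subspace_scale)
    then have "(x /\<^sub>R norm x) \<bullet> (M *v (x /\<^sub>R norm x)) \<le> u \<bullet> (M *v u)"
      by (rule umax)
    then have "(x \<bullet> (M *v x)) / (norm x)^2 \<le> u \<bullet> (M *v u)"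
      by (simp add: matrix_vector_mult_scaleR power2_eq_square divide_inverse mult_ac)
    with False show ?thesis
      by (simp add: divide_le_eq power2_norm_eq_inner mult.commute)
  qed simp
  moreover have "u \<in> V" "norm u = 1"
    using u by (auto simp: S_def)
  ultimately show ?thesis
    using that by blast
qed

lemma symmetric_matrix_rayleigh_eigenvector:
  fixes M :: "real^'n^'n"
  assumes sym: "transpose M = M"
    and V: "subspace V" "V \<noteq> {0}" and invariant: "\<And>x. x \<in> V \<Longrightarrow> M *v x \<in> V"
  obtains u \<mu> where "u \<in> V" "norm u = 1" "M *v u = \<mu> *\<^sub>R u"
    "\<And>x. x \<in> V \<Longrightarrow> x \<bullet> (M *v x) \<le> \<mu> * (x \<bullet> x)"
proof -
  obtain u where uV: "u \<in> V" and "norm u = 1"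
    and bound: "\<And>x. x \<in> V \<Longrightarrow> x \<bullet> (M *v x) \<le> (u \<bullet> (M *v u)) * (x \<bullet> x)"
    using quadratic_form_max_on_subspace[OF V] by blast
  define \<mu> where "\<mu> = u \<bullet> (M *v u)"
  have uu: "u \<bullet> u = 1"
    using \<open>norm u = 1\<close> by (simp add: norm_eq_1)
  text \<open>If \<open>w = M u - \<mu> u\<close> were nonzero, moving \<open>u\<close> along \<open>w\<close> inside \<open>V\<close> would
    increase the Rayleigh quotient beyond its maximum \<open>\<mu>\<close>.\<close>
  define w where "w = M *v u - \<mu> *\<^sub>R u"
  have wV: "w \<in> V"
    unfolding w_def using V invariant uV by (simp add: subspace_diff subspace_scale)
  have wu: "w \<bullet> u = 0"
    unfolding w_def inner_diff_left inner_scaleR_left uu by (simp add: \<mu>_def inner_commute[of u])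
  have wMu: "w \<bullet> (M *v u) = w \<bullet> w"
    unfolding w_def by (simp add: inner_diff_right wu[unfolded w_def])
  have "2 * t * (w \<bullet> w) + t^2 * (w \<bullet> (M *v w) - \<mu> * (w \<bullet> w)) \<le> 0" for t
  proof -
    have "u + t *\<^sub>R w \<in> V"
      using V uV wV by (simp add: subspace_add subspace_scale)
    from bound[OF this, folded \<mu>_def]
    have "\<mu> + 2 * t * (w \<bullet> w) + t^2 * (w \<bullet> (M *v w)) \<le> \<mu> * (1 + t^2 * (w \<bullet> w))"
      using symmetric_matrix_inner[OF sym, of u w] wMu uu wu inner_commute[of w "M *v u"]
      by (simp add: matrix_vector_right_distrib matrix_vector_mult_scaleR inner_add_left
          inner_add_right \<mu>_def power2_eq_square algebra_simps inner_commute[of w u])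
    then show ?thesis
      by (simp add: algebra_simps)
  qed
  then have "w \<bullet> w = 0"
    by (intro linear_coeff_zero_if_quadratic_nonpos) auto
  then have "M *v u = \<mu> *\<^sub>R u"
    unfolding w_def by simp
  show ?thesis
    using uV \<open>norm u = 1\<close> \<open>M *v u = \<mu> *\<^sub>R u\<close> bound[folded \<mu>_def] by (rule that)
qed

lemma dim_orthogonal_section_less:
  fixes u :: "real^'n"
  assumes V: "subspace V" and "u \<in> V" and "u \<noteq> 0"
  shows "dim (V \<inter> {x. u \<bullet> x = 0}) < dim V"
proof -
  have W: "subspace (V \<inter> {x. u \<bullet> x = 0})"
    by (intro subspace_inter V subspace_hyperplane)
  have "u \<notin> V \<inter> {x. u \<bullet> x = 0}"
    using \<open>u \<noteq> 0\<close> by simp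
  with \<open>u \<in> V\<close> have "V \<inter> {x. u \<bullet> x = 0} \<subset> V"
    by blast
  with W V show ?thesis
    by (intro dim_psubset) (simp add: span_eq_iff[THEN iffD2])
qed

lemma subset_span_insert_orthogonal_section:
  fixes u :: "real^'n"
  assumes V: "subspace V" and "u \<in> V" and "u \<bullet> u = 1"
    and B: "span B = V \<inter> {x. u \<bullet> x = 0}"
  shows "V \<subseteq> span (insert u B)"
proof
  fix x assume "x \<in> V"
  then have "x - (u \<bullet> x) *\<^sub>R u \<in> span B"
    using B V \<open>u \<in> V\<close> \<open>u \<bullet> u = 1\<close> by (auto simp: subspace_diff subspace_scale inner_diff_right)
  moreover have "span B \<subseteq> span (insert u B)"
    by (rule span_mono) auto
  moreover have "(u \<bullet> x) *\<^sub>R u \<in> span (insert u B)"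
    by (simp add: span_base span_mul)
  ultimately have "(x - (u \<bullet> x) *\<^sub>R u) + (u \<bullet> x) *\<^sub>R u \<in> span (insert u B)"
    by (meson span_add subsetD)
  then show "x \<in> span (insert u B)"
    by simp
qed

lemma symmetric_matrix_eigenbasis_subspace:
  fixes M :: "real^'n^'n"
  assumes sym: "transpose M = M"
  shows "subspace V \<Longrightarrow> (\<forall>x\<in>V. M *v x \<in> V) \<Longrightarrow>
    \<exists>B. B \<subseteq> V \<and> finite B \<and> pairwise orthogonal B \<and>
      (\<forall>b\<in>B. norm b = 1 \<and> (\<exists>l. M *v b = l *\<^sub>R b)) \<and> span B = V"
proof (induction "dim V" arbitrary: V rule: less_induct)
  case less
  show ?case
  proof (cases "V = {0}")
    case True
    then show ?thesis
      by (intro exI[of _ "{}"]) auto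
  next
    case False
    with less.prems obtain u \<mu> where u: "u \<in> V" "norm u = 1" "M *v u = \<mu> *\<^sub>R u"
      using symmetric_matrix_rayleigh_eigenvector[OF sym, of V] by blast
    then have uu: "u \<bullet> u = 1"
      by (simp add: norm_eq_1)
    define W where "W = V \<inter> {x. u \<bullet> x = 0}"
    have W: "subspace W"
      unfolding W_def by (intro subspace_inter less.prems(1) subspace_hyperplane)
    have "u \<bullet> (M *v x) = 0" if "x \<in> W" for x
      using that u(3) symmetric_matrix_inner[OF sym, of u x] by (simp add: W_def)
    then have "\<forall>x\<in>W. M *v x \<in> W"
      using less.prems(2) by (auto simp: W_def)
    moreover have "dim W < dim V"
      unfolding W_def using less.prems(1) u by (intro dim_orthogonal_section_less) auto
    ultimately obtain B where B: "B \<subseteq> W" "finite B" "pairwise orthogonal B"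
      "\<forall>b\<in>B. norm b = 1 \<and> (\<exists>l. M *v b = l *\<^sub>R b)" "span B = W"
      using less.hyps W by blast
    have "V \<subseteq> span (insert u B)"
      using subset_span_insert_orthogonal_section[OF less.prems(1) u(1) uu] B(5) by (simp add: W_def)
    moreover have uB: "insert u B \<subseteq> V"
      using B(1) u(1) by (auto simp: W_def)
    moreover have "span (insert u B) \<subseteq> V"
      using span_minimal[OF uB less.prems(1)] .
    moreover have "pairwise orthogonal (insert u B)"
      using B(1,3) by (auto simp: pairwise_insert orthogonal_def W_def inner_commute)
    ultimately show ?thesis
      using B(2,4) u by (intro exI[of _ "insert u B"]) auto
  qed
qed

lemma symmetric_matrix_eigenbasis:
  fixes M :: "real^'n^'n"
  assumes "transpose M = M"
  obtains B and eig :: "real^'n \<Rightarrow> real" where "finite B" "pairwise orthogonal B"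
    "\<forall>b\<in>B. norm b = 1" "\<forall>b\<in>B. M *v b = eig b *\<^sub>R b" "span B = UNIV"
proof -
  obtain B where B: "finite B" "pairwise orthogonal B"
    "\<forall>b\<in>B. norm b = 1 \<and> (\<exists>l. M *v b = l *\<^sub>R b)" "span B = UNIV"
    using symmetric_matrix_eigenbasis_subspace[OF assms subspace_UNIV] by auto
  then obtain eig where "\<forall>b\<in>B. M *v b = eig b *\<^sub>R b"
    by metis
  with B that show ?thesis
    by blast
qed

lemma orthonormal_sum_inner:
  fixes B :: "'a::real_inner set"
  assumes "finite B" "pairwise orthogonal B" "\<forall>b\<in>B. norm b = 1" "b0 \<in> B"
  shows "(\<Sum>b\<in>B. c b *\<^sub>R b) \<bullet> b0 = c b0"
proof -
  have "(\<Sum>b\<in>B. c b *\<^sub>R b) \<bullet> b0 = (\<Sum>b\<in>B. if b = b0 then c b0 else 0)"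
    unfolding inner_sum_left using assms(2-4)
    by (intro sum.cong) (auto simp: pairwise_def orthogonal_def norm_eq_1)
  with assms(1,4) show ?thesis
    by simp
qed

lemma orthonormal_expansion:
  fixes B :: "'a::real_inner set"
  assumes "finite B" "pairwise orthogonal B" "\<forall>b\<in>B. norm b = 1" "span B = UNIV"
  shows "x = (\<Sum>b\<in>B. (x \<bullet> b) *\<^sub>R b)"
proof -
  define y where "y = x - (\<Sum>b\<in>B. (x \<bullet> b) *\<^sub>R b)"
  have "orthogonal y b" if "b \<in> B" for b
    using orthonormal_sum_inner[OF assms(1-3) that, of "\<lambda>b. x \<bullet> b"]
    by (simp add: y_def orthogonal_def inner_diff_left)
  then have "orthogonal y y"
    using assms(4) by (intro orthogonal_to_span[of y B y]) auto
  then show ?thesis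
    by (simp add: y_def orthogonal_def)
qed

lemma finite_eigenvalues:
  fixes M :: "real^'n^'n"
  assumes sym: "transpose M = M"
  shows "finite {l. \<exists>v. v \<noteq> 0 \<and> M *v v = l *\<^sub>R v}"
proof -
  obtain B eig where B: "finite B" "pairwise orthogonal B" "\<forall>b\<in>B. norm b = 1"
    "\<forall>b\<in>B. M *v b = eig b *\<^sub>R b" "span B = UNIV"
    using symmetric_matrix_eigenbasis[OF sym] by blast
  have "l \<in> eig ` B" if "v \<noteq> 0" "M *v v = l *\<^sub>R v" for l v
  proof -
    have "\<exists>b\<in>B. v \<bullet> b \<noteq> 0"
    proof (rule ccontr)
      assume "\<not> ?thesis"
      then have "(\<Sum>b\<in>B. (v \<bullet> b) *\<^sub>R b) = 0"
        by simp
      with orthonormal_expansion[OF B(1-3,5), of v] \<open>v \<noteq> 0\<close> show False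
        by simp
    qed
    then obtain b where b: "b \<in> B" "v \<bullet> b \<noteq> 0"
      by blast
    have "l * (v \<bullet> b) = eig b * (v \<bullet> b)"
      using symmetric_matrix_inner[OF sym, of v b] that(2) B(4) b(1) by simp
    with b show ?thesis
      by auto
  qed
  then have "{l. \<exists>v. v \<noteq> 0 \<and> M *v v = l *\<^sub>R v} \<subseteq> eig ` B"
    by blast
  then show ?thesis
    using B(1) finite_surj by blast
qed

lemma quadratic_form_le_sigma_max:
  fixes A :: "real^'d^'n"
  shows "(A *v x) \<bullet> (A *v x) \<le> (sigma_max A)^2 * (x \<bullet> x)"
proof -
  define G where "G = transpose A ** A"
  define L where "L = {l. \<exists>v. v \<noteq> 0 \<and> G *v v = l *\<^sub>R v}"
  have sym: "transpose G = G"
    by (simp add: G_def matrix_transpose_mul)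
  obtain u \<mu> where u: "norm u = 1" "G *v u = \<mu> *\<^sub>R u"
    and bound: "\<And>x. x \<bullet> (G *v x) \<le> \<mu> * (x \<bullet> x)"
    using symmetric_matrix_rayleigh_eigenvector[OF sym subspace_UNIV UNIV_not_singleton_0] by auto
  have "u \<noteq> 0"
    using u(1) by auto
  with u(2) have "\<mu> \<in> L"
    by (auto simp: L_def)
  then have "\<mu> \<le> Max L"
    using finite_eigenvalues[OF sym] by (simp add: L_def)
  moreover have "\<mu> = (A *v u) \<bullet> (A *v u)"
    using gram_matrix_quadratic_form[of u A] u by (simp add: G_def norm_eq_1)
  ultimately have "0 \<le> Max L"
    using inner_ge_zero[of "A *v u"] by linarith
  then have "(sigma_max A)^2 = Max L"
    by (simp add: sigma_max_def L_def G_def)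
  have "(A *v x) \<bullet> (A *v x) = x \<bullet> (G *v x)"
    by (simp add: G_def gram_matrix_quadratic_form)
  also have "\<dots> \<le> \<mu> * (x \<bullet> x)"
    by (rule bound)
  also have "\<dots> \<le> Max L * (x \<bullet> x)"
    using \<open>\<mu> \<le> Max L\<close> by (simp add: mult_right_mono)
  finally show ?thesis
    using \<open>(sigma_max A)^2 = Max L\<close> by simp
qed

section \<open>Positive semidefinite square roots\<close>

lemma psd_square_root_on_eigenvector:
  fixes R :: "real^'n^'n"
  assumes sym: "transpose R = R" and psd: "\<forall>x. 0 \<le> x \<bullet> (R *v x)"
    and eig: "R *v (R *v b) = l *\<^sub>R b" and "0 \<le> l"
  shows "R *v b = sqrt l *\<^sub>R b"
proof (cases "l = 0")
  case True
  have "(R *v b) \<bullet> (R *v b) = b \<bullet> (R *v (R *v b))"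
    by (rule symmetric_matrix_inner[OF sym])
  with eig True show ?thesis
    by simp
next
  case False
  define \<mu> where "\<mu> = sqrt l"
  have \<mu>: "\<mu> > 0" "\<mu> * \<mu> = l"
    using False \<open>0 \<le> l\<close> by (auto simp: \<mu>_def)
  define z where "z = R *v b - \<mu> *\<^sub>R b"
  have "R *v z = - \<mu> *\<^sub>R z"
    using eig by (simp add: z_def matrix_vector_mult_diff_distrib matrix_vector_mult_scaleR
        algebra_simps \<mu>(2)[symmetric])
  then have "\<mu> * (z \<bullet> z) \<le> 0"
    using psd[rule_format, of z] by simp
  then have "z \<bullet> z \<le> 0"
    using \<mu>(1) by (simp add: mult_le_0_iff)
  then have "z = 0"
    by (metis inner_gt_zero_iff not_le)
  then show ?thesis
    by (simp add: z_def \<mu>_def)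
qed

lemma psd_square_root_unique:
  fixes R R' :: "real^'n^'n"
  assumes R: "transpose R = R" "\<forall>x. 0 \<le> x \<bullet> (R *v x)"
    and R': "transpose R' = R'" "\<forall>x. 0 \<le> x \<bullet> (R' *v x)"
    and square: "R ** R = R' ** R'"
  shows "R = R'"
proof -
  have "transpose (R ** R) = R ** R"
    by (simp add: matrix_transpose_mul R(1))
  then obtain B eig where B: "finite B" "pairwise orthogonal B" "\<forall>b\<in>B. norm b = 1"
    "\<forall>b\<in>B. (R ** R) *v b = eig b *\<^sub>R b" "span B = UNIV"
    using symmetric_matrix_eigenbasis by blast
  have "R *v b = R' *v b" if "b \<in> B" for b
  proof -
    have RRb: "R *v (R *v b) = eig b *\<^sub>R b" and R'R'b: "R' *v (R' *v b) = eig b *\<^sub>R b"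
      using B(4) that square by (simp_all add: matrix_vector_mul_assoc)
    have "eig b = b \<bullet> (R *v (R *v b))"
      using RRb B(3) that by (simp add: norm_eq_1)
    also have "\<dots> = (R *v b) \<bullet> (R *v b)"
      by (simp add: symmetric_matrix_inner[OF R(1)])
    finally have "0 \<le> eig b"
      by simp
    then show ?thesis
      using psd_square_root_on_eigenvector[OF R RRb] psd_square_root_on_eigenvector[OF R' R'R'b]
      by simp
  qed
  then have "R *v x = R' *v x" for x
    using linear_eq_on_span[of "(*v) R" "(*v) R'" B x] B(5)
    by (simp add: matrix_vector_mul_linear)
  then show ?thesis
    by (simp add: matrix_eq)
qed

lemma matrix_of_weighted_expansion:
  fixes B :: "(real^'n) set" and w :: "real^'n \<Rightarrow> real"
  shows "\<exists>R :: real^'n^'n. \<forall>x. R *v x = (\<Sum>b\<in>B. (w b * (x \<bullet> b)) *\<^sub>R b)"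
proof -
  define f where "f x = (\<Sum>b\<in>B. (w b * (x \<bullet> b)) *\<^sub>R b)" for x
  have "linear f"
    by (rule linearI) (simp_all add: f_def inner_add_left scaleR_sum_right
        sum.distrib[symmetric] algebra_simps scaleR_add_left)
  then have "\<forall>x. matrix f *v x = f x"
    by (simp add: matrix_works)
  then show ?thesis
    unfolding f_def by blast
qed

lemma psd_square_root_exists:
  fixes H :: "real^'n^'n"
  assumes sym: "transpose H = H" and psd: "\<forall>x. 0 \<le> x \<bullet> (H *v x)"
  obtains R where "transpose R = R" "\<forall>x. 0 \<le> x \<bullet> (R *v x)" "R ** R = H"
proof -
  obtain B eig where B: "finite B" "pairwise orthogonal B" "\<forall>b\<in>B. norm b = 1"
    "\<forall>b\<in>B. H *v b = eig b *\<^sub>R b" "span B = UNIV"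
    using symmetric_matrix_eigenbasis[OF sym] by blast
  have eig_nonneg: "0 \<le> eig b" if "b \<in> B" for b
    using psd[rule_format, of b] B(3,4) that by (simp add: norm_eq_1)
  obtain R where Rx: "\<And>x. R *v x = (\<Sum>b\<in>B. (sqrt (eig b) * (x \<bullet> b)) *\<^sub>R b)"
    using matrix_of_weighted_expansion[where B = B and w = "\<lambda>b. sqrt (eig b)"] by blast
  have R_inner: "y \<bullet> (R *v x) = (\<Sum>b\<in>B. sqrt (eig b) * (x \<bullet> b) * (y \<bullet> b))" for x y
    by (simp add: Rx inner_sum_right)
  have "transpose R = R"
    unfolding symmetric_matrix_iff_inner
  proof (intro allI)
    fix x y
    have "(R *v x) \<bullet> y = y \<bullet> (R *v x)"
      by (rule inner_commute)
    also have "\<dots> = x \<bullet> (R *v y)"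
      unfolding R_inner by (simp add: mult_ac)
    finally show "(R *v x) \<bullet> y = x \<bullet> (R *v y)" .
  qed
  moreover have "0 \<le> x \<bullet> (R *v x)" for x
    unfolding R_inner using eig_nonneg by (intro sum_nonneg) (simp add: mult.assoc)
  moreover have "R ** R = H"
  proof (subst matrix_eq, rule allI)
    fix x
    have "(R ** R) *v x = (\<Sum>b\<in>B. (eig b * (x \<bullet> b)) *\<^sub>R b)"
      unfolding matrix_vector_mul_assoc[symmetric] Rx[of "R *v x"]
      using orthonormal_sum_inner[OF B(1-3)] eig_nonneg
      by (intro sum.cong) (simp_all add: Rx mult.assoc[symmetric])
    also have "\<dots> = (\<Sum>b\<in>B. (x \<bullet> b) *\<^sub>R (H *v b))"
      using B(4) by (intro sum.cong) auto
    also have "\<dots> = H *v (\<Sum>b\<in>B. (x \<bullet> b) *\<^sub>R b)"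
      by (simp add: matrix_mult_vector_sum matrix_vector_mult_scaleR)
    also have "(\<Sum>b\<in>B. (x \<bullet> b) *\<^sub>R b) = x"
      by (rule orthonormal_expansion[OF B(1-3,5), symmetric])
    finally show "(R ** R) *v x = H *v x" .
  qed
  ultimately show ?thesis
    using that by blast
qed

lemma psd_sqrt:
  fixes H :: "real^'n^'n"
  assumes "transpose H = H" and "\<forall>x. 0 \<le> x \<bullet> (H *v x)"
  shows "transpose (psd_sqrt H) = psd_sqrt H" and "psd_sqrt H ** psd_sqrt H = H"
proof -
  obtain R where R: "transpose R = R" "\<forall>x. 0 \<le> x \<bullet> (R *v x)" "R ** R = H"
    using psd_square_root_exists[OF assms] by blast
  have "psd_sqrt H = R"
    unfolding psd_sqrt_def
  proof (rule the_equality)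
    fix R' assume R': "transpose R' = R' \<and> (\<forall>x. 0 \<le> x \<bullet> (R' *v x)) \<and> R' ** R' = H"
    show "R' = R"
      using psd_square_root_unique[of R' R] R' R by simp
  qed (use R in blast)
  with R show "transpose (psd_sqrt H) = psd_sqrt H" and "psd_sqrt H ** psd_sqrt H = H"
    by simp_all
qed

section \<open>Positive definite matrices and inverse quadratic forms\<close>

lemma matrix_inv_inverse:
  fixes P :: "'a::semiring_1^'n^'m"
  assumes "invertible P"
  shows "P ** matrix_inv P = mat 1" and "matrix_inv P ** P = mat 1"
proof -
  have "P ** matrix_inv P = mat 1 \<and> matrix_inv P ** P = mat 1"
    using assms unfolding invertible_def matrix_inv_def by (rule someI_ex)
  then show "P ** matrix_inv P = mat 1" and "matrix_inv P ** P = mat 1"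
    by auto
qed

lemma matrix_inv_mult_vector:
  fixes P :: "'a::comm_semiring_1^'n^'m"
  assumes "invertible P"
  shows "P *v (matrix_inv P *v x) = x" and "matrix_inv P *v (P *v y) = y"
  using matrix_inv_inverse[OF assms] by (simp_all add: matrix_vector_mul_assoc)

lemma pos_def_psd:
  assumes "pos_def P"
  shows "0 \<le> x \<bullet> (P *v x)"
proof (cases "x = 0")
  case False
  with assms show ?thesis
    by (simp add: pos_def_def less_imp_le)
qed simp

lemma pos_def_invertible:
  assumes "pos_def P"
  shows "invertible P"
proof -
  have "x = 0" if "P *v x = 0" for x
  proof (rule ccontr)
    assume "x \<noteq> 0"
    with assms have "0 < x \<bullet> (P *v x)"
      by (simp add: pos_def_def)
    with that show False
      by simp
  qed
  then have "\<exists>B. B ** P = mat 1"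
    by (simp add: matrix_left_invertible_ker)
  then show ?thesis
    by (simp add: invertible_left_inverse)
qed

lemma inverse_quadratic_form_ge:
  fixes Q :: "real^'n^'n"
  assumes "pos_def Q"
  shows "2 * (g \<bullet> y) - y \<bullet> (Q *v y) \<le> g \<bullet> (matrix_inv Q *v g)"
proof -
  have sym: "transpose Q = Q" and inv: "invertible Q"
    using assms pos_def_invertible by (auto simp: pos_def_def)
  define z where "z = matrix_inv Q *v g"
  have g: "g = Q *v z"
    by (simp add: z_def matrix_inv_mult_vector[OF inv])
  have "0 \<le> (z - y) \<bullet> (Q *v (z - y))"
    using assms by (rule pos_def_psd)
  also have "\<dots> = z \<bullet> (Q *v z) - 2 * ((Q *v z) \<bullet> y) + y \<bullet> (Q *v y)"
    using symmetric_matrix_inner[OF sym, of z y] symmetric_matrix_inner[OF sym, of y z]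
    by (simp add: matrix_vector_mult_diff_distrib inner_diff_left inner_diff_right inner_commute)
  finally show ?thesis
    unfolding g by (simp add: matrix_inv_mult_vector[OF inv] inner_commute)
qed

lemma inverse_quadratic_form_antimono:
  fixes P Q :: "real^'n^'n"
  assumes "pos_def P" "pos_def Q"
    and "a > 0" and le: "\<forall>x. a * (x \<bullet> (Q *v x)) \<le> x \<bullet> (P *v x)"
  shows "g \<bullet> (matrix_inv P *v g) \<le> g \<bullet> (matrix_inv Q *v g) / a"
proof -
  define x where "x = matrix_inv P *v g"
  have Px: "P *v x = g"
    using assms(1) by (simp add: x_def matrix_inv_mult_vector pos_def_invertible)
  have "2 * (a * (g \<bullet> x)) - a * (a * (x \<bullet> (Q *v x))) \<le> g \<bullet> (matrix_inv Q *v g)"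
    using inverse_quadratic_form_ge[OF assms(2), of g "a *\<^sub>R x"] by (simp add: matrix_vector_mult_scaleR)
  moreover have "a * (x \<bullet> (Q *v x)) \<le> g \<bullet> x"
    using le[rule_format, of x] Px by (simp add: inner_commute)
  then have "a * (a * (x \<bullet> (Q *v x))) \<le> a * (g \<bullet> x)"
    using \<open>a > 0\<close> by simp
  ultimately have "a * (g \<bullet> x) \<le> g \<bullet> (matrix_inv Q *v g)"
    by linarith
  with \<open>a > 0\<close> show ?thesis
    by (simp add: x_def field_simps)
qed

lemma inverse_quadratic_form_eq_0:
  fixes P :: "real^'n^'n"
  assumes "pos_def P" and "g \<bullet> (matrix_inv P *v g) = 0"
  shows "g = 0"
proof -
  define y where "y = matrix_inv P *v g"
  have g: "g = P *v y"
    using assms(1) by (simp add: y_def matrix_inv_mult_vector pos_def_invertible)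
  have "y \<bullet> (P *v y) = 0"
    using assms(2) by (simp add: g[symmetric] y_def[symmetric] inner_commute)
  with assms(1) have "y = 0"
    unfolding pos_def_def by (metis less_irrefl)
  then show ?thesis
    by (simp add: g)
qed

lemma abs_quadratic_form_le_spec_norm:
  fixes M :: "real^'n^'n"
  shows "\<bar>y \<bullet> (M *v y)\<bar> \<le> spec_norm M * (y \<bullet> y)"
proof -
  have "\<bar>y \<bullet> (M *v y)\<bar> \<le> norm y * norm (M *v y)"
    by (rule Cauchy_Schwarz_ineq2)
  also have "\<dots> \<le> norm y * (spec_norm M * norm y)"
    unfolding spec_norm_def
    by (intro mult_left_mono onorm matrix_vector_mul_bounded_linear) simp
  also have "\<dots> = spec_norm M * (y \<bullet> y)"
    by (simp add: power2_norm_eq_inner[symmetric] power2_eq_square)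
  finally show ?thesis .
qed

lemma sketch_gram_mult_vector: "sketch_gram m S *v y = (\<Sum>i<m. (S i \<bullet> y) *\<^sub>R S i)"
proof -
  have "(sketch_gram m S *v y) $ j = (\<Sum>i<m. (S i \<bullet> y) *\<^sub>R S i) $ j" for j
  proof -
    have "(sketch_gram m S *v y) $ j = (\<Sum>k\<in>UNIV. \<Sum>i<m. S i $ j * (S i $ k * y $ k))"
      by (simp add: matrix_vector_mult_def sketch_gram_def sum_distrib_right mult.assoc)
    also have "\<dots> = (\<Sum>i<m. (S i \<bullet> y) * S i $ j)"
      by (subst sum.swap) (simp add: inner_vec_def sum_distrib_left mult.commute)
    finally show ?thesis
      by (simp add: sum_component)
  qed
  then show ?thesis
    by (simp add: vec_eq_iff)
qed

lemma sketch_gram_psd: "0 \<le> y \<bullet> (sketch_gram m S *v y)"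
  by (simp add: sketch_gram_mult_vector inner_sum_right sum_nonneg inner_commute)

lemma sketch_gram_symmetric: "transpose (sketch_gram m S) = sketch_gram m S"
  by (simp add: transpose_def sketch_gram_def vec_eq_iff mult.commute)

lemma Hmat_mult_vector: "Hmat A \<Lambda> \<nu> *v x = transpose A *v (A *v x) + \<nu>^2 *\<^sub>R (\<Lambda> *v x)"
  by (simp add: Hmat_def matrix_vector_mult_add_rdistrib matrix_vector_mul_assoc[symmetric]
      scaleR_matrix_vector_assoc)

lemma HSmat_mult_vector:
  "HSmat A \<Lambda> \<nu> m S *v x = transpose A *v (sketch_gram m S *v (A *v x)) + \<nu>^2 *\<^sub>R (\<Lambda> *v x)"
  by (simp add: HSmat_def matrix_vector_mult_add_rdistrib matrix_vector_mul_assoc[symmetric]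
      scaleR_matrix_vector_assoc)

lemma length_pfom_list [simp]: "length (pfom_list \<psi> P x0 t) = Suc t"
  by (induction t) auto

lemma pfom_list_last: "pfom_list \<psi> P x0 (Suc t) ! Suc t = \<psi> t (pfom_list \<psi> P x0 t) P"
  by (simp add: nth_append)

lemma pfom_list_stationary:
  assumes "is_pfom A b \<Lambda> \<nu> \<psi>" "pos_def P" "grad_f A b \<Lambda> \<nu> x = 0"
  shows "s \<le> t \<Longrightarrow> pfom_list \<psi> P x t ! s = x"
proof (induction t arbitrary: s)
  case 0
  then show ?case
    by simp
next
  case (Suc t)
  have "set (pfom_list \<psi> P x t) \<subseteq> {x}"
    using Suc.IH by (auto simp: set_conv_nth)
  then have "grad_f A b \<Lambda> \<nu> ` set (pfom_list \<psi> P x t) \<subseteq> {0}"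
    using assms(3) by auto
  then have "span (grad_f A b \<Lambda> \<nu> ` set (pfom_list \<psi> P x t)) \<subseteq> span {0}"
    by (rule span_mono)
  then have "span (grad_f A b \<Lambda> \<nu> ` set (pfom_list \<psi> P x t)) \<subseteq> {0}"
    by simp
  moreover have "pfom_list \<psi> P x (Suc t) ! Suc t \<in>
      (\<lambda>v. x + matrix_inv P *v v) ` span (grad_f A b \<Lambda> \<nu> ` set (pfom_list \<psi> P x t))"
    using assms(1,2) unfolding is_pfom_def by blast
  ultimately have "pfom_list \<psi> P x (Suc t) ! Suc t = x"
    by auto
  with Suc show ?case
    by (auto simp: nth_append le_Suc_eq)
qed

locale regularized_quadratic =
  fixes A :: "real^'d^'n" and b :: "real^'d" and \<Lambda> :: "real^'d^'d" and \<nu> :: real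
  assumes \<Lambda>_symmetric: "transpose \<Lambda> = \<Lambda>"
    and \<Lambda>_ge_identity: "\<forall>x. x \<bullet> x \<le> x \<bullet> (\<Lambda> *v x)"
    and \<nu>_pos: "\<nu> > 0"
begin

abbreviation H :: "real^'d^'d" where "H \<equiv> Hmat A \<Lambda> \<nu>"
abbreviation H_S :: "nat \<Rightarrow> (nat \<Rightarrow> real^'n) \<Rightarrow> real^'d^'d" where "H_S m S \<equiv> HSmat A \<Lambda> \<nu> m S"
abbreviation grad :: "real^'d \<Rightarrow> real^'d" where "grad x \<equiv> grad_f A b \<Lambda> \<nu> x"
abbreviation gap :: "real^'d \<Rightarrow> real" where "gap x \<equiv> subopt A b \<Lambda> \<nu> x"
abbreviation gap_est :: "real^'d^'d \<Rightarrow> real^'d \<Rightarrow> real" where "gap_est P x \<equiv> dtil A b \<Lambda> \<nu> P x"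

definition \<kappa> :: real where "\<kappa> = ((sigma_max A)^2 + \<nu>^2) / \<nu>^2"

lemma \<kappa>_ge_1: "\<kappa> \<ge> 1"
  using \<nu>_pos by (simp add: \<kappa>_def)

lemma H_symmetric: "transpose H = H"
  by (simp add: Hmat_def transpose_add transpose_scalar matrix_transpose_mul \<Lambda>_symmetric)

lemma H_S_symmetric: "transpose (H_S m S) = H_S m S"
  by (simp add: HSmat_def transpose_add transpose_scalar matrix_transpose_mul \<Lambda>_symmetric
      sketch_gram_symmetric matrix_mul_assoc)

lemma H_quadratic_form: "x \<bullet> (H *v x) = (A *v x) \<bullet> (A *v x) + \<nu>^2 * (x \<bullet> (\<Lambda> *v x))"
  by (simp add: Hmat_mult_vector inner_add_right inner_vector_matrix_mult)

lemma H_S_quadratic_form: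
  "x \<bullet> (H_S m S *v x) = (A *v x) \<bullet> (sketch_gram m S *v (A *v x)) + \<nu>^2 * (x \<bullet> (\<Lambda> *v x))"
  by (simp add: HSmat_mult_vector inner_add_right inner_vector_matrix_mult)

lemma \<Lambda>_form_ge: "\<nu>^2 * (x \<bullet> x) \<le> \<nu>^2 * (x \<bullet> (\<Lambda> *v x))"
  using \<Lambda>_ge_identity by (simp add: mult_left_mono)

lemma H_S_ge: "\<nu>^2 * (x \<bullet> (\<Lambda> *v x)) \<le> x \<bullet> (H_S m S *v x)"
  unfolding H_S_quadratic_form using sketch_gram_psd by simp

lemma pos_def_H: "pos_def H"
proof -
  have "0 < x \<bullet> (H *v x)" if "x \<noteq> 0" for x
  proof -
    have "0 < \<nu>^2 * (x \<bullet> x)"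
      using that \<nu>_pos by simp
    also have "\<dots> \<le> \<nu>^2 * (x \<bullet> (\<Lambda> *v x))"
      by (rule \<Lambda>_form_ge)
    also have "\<dots> \<le> x \<bullet> (H *v x)"
      unfolding H_quadratic_form by simp
    finally show ?thesis .
  qed
  then show ?thesis
    by (simp add: pos_def_def H_symmetric)
qed

lemma pos_def_H_S: "pos_def (H_S m S)"
proof -
  have "0 < x \<bullet> (H_S m S *v x)" if "x \<noteq> 0" for x
  proof -
    have "0 < \<nu>^2 * (x \<bullet> x)"
      using that \<nu>_pos by simp
    also have "\<dots> \<le> \<nu>^2 * (x \<bullet> (\<Lambda> *v x))"
      by (rule \<Lambda>_form_ge)
    also have "\<dots> \<le> x \<bullet> (H_S m S *v x)"
      by (rule H_S_ge)
    finally show ?thesis .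
  qed
  then show ?thesis
    by (simp add: pos_def_def H_S_symmetric)
qed

lemma H_le_\<kappa>_H_S: "x \<bullet> (H *v x) \<le> \<kappa> * (x \<bullet> (H_S m S *v x))"
proof -
  define q where "q = x \<bullet> (\<Lambda> *v x)"
  have "(A *v x) \<bullet> (A *v x) \<le> (sigma_max A)^2 * q"
    using quadratic_form_le_sigma_max[of A x] \<Lambda>_ge_identity
    by (simp add: q_def) (meson mult_left_mono order_trans zero_le_power2)
  then have "x \<bullet> (H *v x) \<le> ((sigma_max A)^2 + \<nu>^2) * q"
    unfolding H_quadratic_form q_def[symmetric] by (simp add: algebra_simps)
  also have "\<dots> = \<kappa> * (\<nu>^2 * q)"
    using \<nu>_pos by (simp add: \<kappa>_def)
  also have "\<dots> \<le> \<kappa> * (x \<bullet> (H_S m S *v x))"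
    using H_S_ge[of x m S] \<kappa>_ge_1 by (simp add: q_def)
  finally show ?thesis .
qed

lemma grad_eq: "grad x = H *v (x - xstar A b \<Lambda> \<nu>)"
  using pos_def_invertible[OF pos_def_H]
  by (simp add: grad_f_def xstar_def matrix_vector_mult_diff_distrib matrix_inv_mult_vector)

lemma gap_eq_inverse_form: "gap x = 1/2 * (grad x \<bullet> (matrix_inv H *v grad x))"
  using pos_def_invertible[OF pos_def_H]
  by (simp add: subopt_def grad_eq matrix_inv_mult_vector inner_commute)

lemma gap_nonneg: "0 \<le> gap x"
  unfolding subopt_def using pos_def_psd[OF pos_def_H] by simp

lemma gap_est_nonneg: "pos_def P \<Longrightarrow> 0 \<le> gap_est P x"
  using inverse_quadratic_form_ge[of P _ 0] by (simp add: dtil_def)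

lemma grad_eq_0_if_gap_est_eq_0: "pos_def P \<Longrightarrow> gap_est P x = 0 \<Longrightarrow> grad x = 0"
  using inverse_quadratic_form_eq_0 by (simp add: dtil_def)

lemma gap_le_gap_est:
  assumes "pos_def P" and "e > 0" and "\<forall>y. y \<bullet> (P *v y) \<le> e * (y \<bullet> (H *v y))"
  shows "gap x \<le> e * gap_est P x"
proof -
  have "\<forall>y. 1 / e * (y \<bullet> (P *v y)) \<le> y \<bullet> (H *v y)"
    using assms(2,3) by (simp add: field_simps)
  from inverse_quadratic_form_antimono[OF pos_def_H assms(1) _ this] assms(2)
  show ?thesis
    by (simp add: gap_eq_inverse_form dtil_def mult_ac)
qed

lemma gap_est_le_gap:
  assumes "pos_def P" and "a > 0" and "\<forall>y. a * (y \<bullet> (H *v y)) \<le> y \<bullet> (P *v y)"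
  shows "gap_est P x \<le> gap x / a"
  using inverse_quadratic_form_antimono[OF assms(1) pos_def_H assms(2,3)]
  by (simp add: gap_eq_inverse_form dtil_def)

lemma sketch_event_quadratic_bounds:
  assumes "sketch_event A \<Lambda> \<nu> \<rho> m S"
  shows "\<bar>x \<bullet> (H_S m S *v x) - x \<bullet> (H *v x)\<bar> \<le> max (sqrt \<rho>) \<rho> * (x \<bullet> (H *v x))"
proof -
  define R where "R = psd_sqrt H"
  define R' where "R' = matrix_inv R"
  have R: "transpose R = R" "R ** R = H"
    using psd_sqrt[OF H_symmetric allI[OF pos_def_psd[OF pos_def_H]]] by (simp_all add: R_def)
  have "(matrix_inv H ** R) ** R = mat 1"
    using matrix_inv_inverse(2)[OF pos_def_invertible[OF pos_def_H]] by (simp add: matrix_mul_assoc[symmetric] R(2))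
  then have R_inv: "invertible R"
    by (auto simp: invertible_left_inverse)
  define C where "C = R' ** H_S m S ** R'"
  define y where "y = R *v x"
  have "y \<bullet> (C *v y) = (R *v x) \<bullet> (R' *v (H_S m S *v x))"
    using R_inv by (simp add: C_def y_def R'_def matrix_vector_mul_assoc[symmetric] matrix_inv_mult_vector)
  also have "\<dots> = x \<bullet> (H_S m S *v x)"
    using R_inv by (simp add: symmetric_matrix_inner[OF R(1)] R'_def matrix_inv_mult_vector)
  finally have yCy: "y \<bullet> (C *v y) = x \<bullet> (H_S m S *v x)" .
  have "y \<bullet> y = x \<bullet> (R *v (R *v x))"
    unfolding y_def by (rule symmetric_matrix_inner[OF R(1)])
  then have yy: "y \<bullet> y = x \<bullet> (H *v x)"
    by (simp add: matrix_vector_mul_assoc R(2))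
  have "spec_norm (C - mat 1) \<le> max (sqrt \<rho>) \<rho>"
    using assms by (simp add: sketch_event_def CSmat_def C_def R'_def R_def)
  then have "\<bar>y \<bullet> ((C - mat 1) *v y)\<bar> \<le> max (sqrt \<rho>) \<rho> * (y \<bullet> y)"
    using abs_quadratic_form_le_spec_norm[of y "C - mat 1"] inner_ge_zero[of y]
    by (meson mult_right_mono order_trans)
  then show ?thesis
    by (simp add: matrix_vector_mult_diff_rdistrib inner_diff_right yCy yy)
qed

end

section \<open>Analysis of the adaptive algorithm on good sketches\<close>

locale adaptive_sketch_run = regularized_quadratic A b \<Lambda> \<nu>
  for A :: "real^'d^'n" and b \<Lambda> \<nu> +
  fixes \<psi> :: "'d pfom" and \<rho> r \<alpha> :: real and K m_init :: nat
    and \<omega> :: "nat \<Rightarrow> nat \<Rightarrow> real^'n" and x0 :: "real^'d"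
  assumes pfom: "is_pfom A b \<Lambda> \<nu> \<psi>"
    and lin_conv: "lin_conv A b \<Lambda> \<nu> \<psi> \<rho> r \<alpha>"
    and r_pos: "0 < r" and \<rho>_pos: "0 < \<rho>" and \<rho>_less_1: "\<rho> < 1"
    and m_init_pos: "1 \<le> m_init"
    and last_sketch_good: "sketch_event A \<Lambda> \<nu> \<rho> (m_init * 2^K) (\<omega> K)"
    and early_sketch_bounded: "\<And>k x. k < K \<Longrightarrow>
      x \<bullet> (HSmat A \<Lambda> \<nu> (m_init * 2^k) (\<omega> k) *v x) \<le> 2^K * (x \<bullet> (Hmat A \<Lambda> \<nu> *v x))"
begin

abbreviation c :: real where "c \<equiv> c_const \<alpha> \<rho>"

definition precond :: "nat \<Rightarrow> real^'d^'d" where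
  "precond k = H_S (m_init * 2^k) (\<omega> k)"

definition candidate :: "nat \<Rightarrow> nat \<Rightarrow> nat \<Rightarrow> (real^'d) list \<Rightarrow> real^'d" where
  "candidate k I t xs = \<psi> (t - I) (drop I xs) (precond k)"

definition growth :: real where
  "growth = 2^K * c * \<kappa>"

lemma pos_def_precond: "pos_def (precond k)"
  by (simp add: precond_def pos_def_H_S)

lemma candidate_eq_pfom_list:
  "drop I xs = pfom_list \<psi> (precond k) (xs ! I) (t - I) \<Longrightarrow>
    candidate k I t xs = pfom_list \<psi> (precond k) (xs ! I) (Suc (t - I)) ! Suc (t - I)"
  unfolding candidate_def pfom_list_last by simp

lemma sqrt_\<rho>: "0 < sqrt \<rho>" "sqrt \<rho> < 1" "max (sqrt \<rho>) \<rho> = sqrt \<rho>"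
proof -
  show "0 < sqrt \<rho>" "sqrt \<rho> < 1"
    using \<rho>_pos \<rho>_less_1 by auto
  have "\<rho> = sqrt \<rho> * sqrt \<rho>"
    using \<rho>_pos by simp
  also have "\<dots> \<le> sqrt \<rho>"
    using \<open>0 < sqrt \<rho>\<close> \<open>sqrt \<rho> < 1\<close> by (intro mult_right_le_one_le) auto
  finally show "max (sqrt \<rho>) \<rho> = sqrt \<rho>"
    by simp
qed

lemma last_sketch_bounds:
  "x \<bullet> (precond K *v x) \<le> (1 + sqrt \<rho>) * (x \<bullet> (H *v x))"
  "(1 - sqrt \<rho>) * (x \<bullet> (H *v x)) \<le> x \<bullet> (precond K *v x)"
  using sketch_event_quadratic_bounds[OF last_sketch_good, of x] sqrt_\<rho>(3)
  by (auto simp: precond_def algebra_simps abs_le_iff)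

lemma lin_conv_last_level: "gap (pfom_list \<psi> (precond K) x t ! t) \<le> \<alpha> * r^t * gap x"
proof -
  have "1 \<le> m_init * 2^K"
    using m_init_pos by (simp add: Suc_le_eq)
  then show ?thesis
    using lin_conv last_sketch_good unfolding lin_conv_def precond_def by blast
qed

lemma \<alpha>_ge_1: "1 \<le> \<alpha>"
proof -
  define y where "y = xstar A b \<Lambda> \<nu> + axis undefined 1"
  have "0 < gap y"
    using pos_def_H by (simp add: subopt_def y_def pos_def_def axis_eq_0_iff)
  moreover have "gap y \<le> \<alpha> * gap y"
    using lin_conv_last_level[of y 0] by simp
  ultimately show ?thesis
    by simp
qed

lemma c_ge_1: "1 \<le> c"
proof -
  have "1 \<le> (1 + sqrt \<rho>) / (1 - sqrt \<rho>)"
    using sqrt_\<rho> by simp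
  then show ?thesis
    using \<alpha>_ge_1 unfolding c_const_def by (rule one_le_mult)
qed

lemma growth_ge_1: "1 \<le> growth"
proof -
  have "1 \<le> (2::real)^K * c"
    using c_ge_1 by (intro one_le_mult) simp_all
  then show ?thesis
    unfolding growth_def using \<kappa>_ge_1 by (rule one_le_mult)
qed

lemma last_level_contraction:
  assumes "drop I xs = pfom_list \<psi> (precond K) (xs ! I) (t - I)" and "I \<le> t"
  shows "gap (candidate K I t xs) \<le> \<alpha> * r^(Suc t - I) * gap (xs ! I)"
  using lin_conv_last_level[of "xs ! I" "Suc (t - I)"] candidate_eq_pfom_list[OF assms(1)] assms(2)
  by (simp add: Suc_diff_le)

lemma last_level_no_restart:
  assumes "drop I xs = pfom_list \<psi> (precond K) (xs ! I) (t - I)" and "I \<le> t"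
  shows "\<not> gap_est (precond K) (candidate K I t xs) / gap_est (precond K) (xs ! I) > c * r^(Suc t - I)"
proof -
  define n where "n = Suc t - I"
  define dI where "dI = gap_est (precond K) (xs ! I)"
  have "gap_est (precond K) (candidate K I t xs) \<le> gap (candidate K I t xs) / (1 - sqrt \<rho>)"
    using last_sketch_bounds(2) sqrt_\<rho> by (intro gap_est_le_gap pos_def_precond) auto
  also have "\<dots> \<le> \<alpha> * r^n * gap (xs ! I) / (1 - sqrt \<rho>)"
    using last_level_contraction[OF assms] sqrt_\<rho> by (simp add: n_def divide_right_mono)
  also have "\<dots> \<le> \<alpha> * r^n * ((1 + sqrt \<rho>) * dI) / (1 - sqrt \<rho>)"
    using gap_le_gap_est[where e = "1 + sqrt \<rho>", OF pos_def_precond] last_sketch_bounds(1)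
      sqrt_\<rho> \<alpha>_ge_1 r_pos
    by (intro divide_right_mono mult_left_mono) (auto simp: dI_def)
  also have "\<dots> = c * r^n * dI"
    using sqrt_\<rho> by (simp add: c_const_def field_simps)
  finally show ?thesis
    using gap_est_nonneg[OF pos_def_precond] c_ge_1 r_pos
    by (simp add: n_def dI_def not_less divide_le_if_le_mult)
qed

lemma gap_est_precond_le: "gap_est (precond k) x \<le> \<kappa> * gap x"
proof -
  have \<kappa>_inv: "0 < 1 / \<kappa>"
    using \<kappa>_ge_1 by simp
  have "\<forall>y. 1 / \<kappa> * (y \<bullet> (H *v y)) \<le> y \<bullet> (precond k *v y)"
    using H_le_\<kappa>_H_S \<kappa>_ge_1 by (simp add: precond_def field_simps)
  from gap_est_le_gap[OF pos_def_precond \<kappa>_inv this] show ?thesis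
    by (simp add: mult.commute)
qed

lemma gap_le_early_gap_est: "k < K \<Longrightarrow> gap x \<le> 2^K * gap_est (precond k) x"
  using early_sketch_bounded by (intro gap_le_gap_est pos_def_precond) (auto simp: precond_def)

lemma candidate_if_gap_est_eq_0:
  assumes "drop I xs = pfom_list \<psi> (precond k) (xs ! I) (t - I)"
    and "gap_est (precond k) (xs ! I) = 0"
  shows "candidate k I t xs = xs ! I" and "gap (xs ! I) = 0"
proof -
  have "grad (xs ! I) = 0"
    using grad_eq_0_if_gap_est_eq_0[OF pos_def_precond assms(2)] .
  then show "candidate k I t xs = xs ! I" and "gap (xs ! I) = 0"
    using pfom_list_stationary[OF pfom pos_def_precond, where s = "Suc (t - I)" and t = "Suc (t - I)"]
      candidate_eq_pfom_list[OF assms(1)]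
    by (simp_all add: gap_eq_inverse_form)
qed

lemma early_level_accepted_bound:
  assumes "k < K" and epoch: "drop I xs = pfom_list \<psi> (precond k) (xs ! I) (t - I)"
    and accept: "\<not> gap_est (precond k) (candidate k I t xs) / gap_est (precond k) (xs ! I)
      > c * r^(Suc t - I)"
  shows "gap (candidate k I t xs) \<le> growth * r^(Suc t - I) * gap (xs ! I)"
proof (cases "gap_est (precond k) (xs ! I) = 0")
  case True
  then show ?thesis
    using candidate_if_gap_est_eq_0[OF epoch] by simp
next
  case False
  define n where "n = Suc t - I"
  define dI where "dI = gap_est (precond k) (xs ! I)"
  have "0 < dI"
    using False gap_est_nonneg[OF pos_def_precond] by (simp add: dI_def order_less_le)
  then have accepted: "gap_est (precond k) (candidate k I t xs) \<le> c * r^n * dI"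
    using accept by (simp add: n_def dI_def not_less pos_divide_le_eq)
  have "gap (candidate k I t xs) \<le> 2^K * gap_est (precond k) (candidate k I t xs)"
    using \<open>k < K\<close> by (rule gap_le_early_gap_est)
  also have "\<dots> \<le> 2^K * (c * r^n * dI)"
    using accepted by simp
  also have "\<dots> \<le> 2^K * (c * r^n * (\<kappa> * gap (xs ! I)))"
    using gap_est_precond_le c_ge_1 r_pos by (simp add: dI_def)
  finally show ?thesis
    by (simp add: growth_def n_def mult_ac)
qed

text \<open>Within the current epoch, started at \<open>I\<close> on level \<open>k\<close>, the iterates are those of \<open>\<psi>\<close>
  run from \<open>x_I\<close> with preconditioner \<open>precond k\<close>; each of the at most \<open>K\<close> restarts costs
  at most the factor \<open>growth\<close>.\<close>

definition run_invariant :: "'d alg_state \<Rightarrow> bool" where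
  "run_invariant st \<longleftrightarrow> (case st of (t, I, k, xs, dI) \<Rightarrow>
     length xs = Suc t \<and> xs ! 0 = x0 \<and> I \<le> t \<and> k \<le> K \<and>
     dI = gap_est (precond k) (xs ! I) \<and>
     drop I xs = pfom_list \<psi> (precond k) (xs ! I) (t - I) \<and>
     gap (xs ! I) \<le> growth^k * r^I * gap x0 \<and>
     (k < K \<longrightarrow> (\<forall>s. I \<le> s \<and> s \<le> t \<longrightarrow> gap (xs ! s) \<le> growth * r^(s - I) * gap (xs ! I))) \<and>
     (\<forall>s\<le>t. gap (xs ! s) \<le> \<alpha> * growth^K * r^s * gap x0))"

lemma run_invariant_init: "run_invariant (0, 0, 0, [x0], gap_est (H_S m_init (\<omega> 0)) x0)"
proof -
  have "1 \<le> \<alpha> * growth^K"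
    using \<alpha>_ge_1 growth_ge_1 by (intro one_le_mult one_le_power)
  then show ?thesis
    using growth_ge_1 gap_nonneg[of x0]
    by (simp add: run_invariant_def precond_def le_mult_if_one_le)
qed

lemma run_invariant_restart:
  assumes inv: "run_invariant (t, I, k, xs, dI)"
    and restart: "gap_est (precond k) (candidate k I t xs) / dI > c * r^(Suc t - I)"
  shows "run_invariant (t, t, Suc k, xs, gap_est (precond (Suc k)) (xs ! t))"
proof -
  have len: "length xs = Suc t" and "I \<le> t" "k \<le> K"
    and epoch: "drop I xs = pfom_list \<psi> (precond k) (xs ! I) (t - I)"
    and gap_I: "gap (xs ! I) \<le> growth^k * r^I * gap x0"
    and early: "k < K \<longrightarrow> (\<forall>s. I \<le> s \<and> s \<le> t \<longrightarrow> gap (xs ! s) \<le> growth * r^(s - I) * gap (xs ! I))"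
    using inv by (simp_all add: run_invariant_def)
  have "k < K"
    using last_level_no_restart[OF _ \<open>I \<le> t\<close>] epoch restart inv \<open>k \<le> K\<close>
    by (cases "k = K") (auto simp: run_invariant_def)
  have "gap (xs ! t) \<le> growth * r^(t - I) * gap (xs ! I)"
    using early \<open>k < K\<close> \<open>I \<le> t\<close> by blast
  also have "\<dots> \<le> growth * r^(t - I) * (growth^k * r^I * gap x0)"
    using gap_I growth_ge_1 r_pos by (intro mult_left_mono) auto
  also have "\<dots> = growth^(Suc k) * r^t * gap x0"
    using \<open>I \<le> t\<close> by (simp add: power_add[symmetric] mult_ac)
  finally have "gap (xs ! t) \<le> growth^(Suc k) * r^t * gap x0" .
  moreover have "drop t xs = [xs ! t]"
    using len by (metis Cons_nth_drop_Suc drop_all lessI order_refl)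
  moreover have "gap (xs ! t) \<le> growth * gap (xs ! t)"
    using growth_ge_1 gap_nonneg by (rule le_mult_if_one_le)
  ultimately show ?thesis
    using inv \<open>k < K\<close> by (auto simp: run_invariant_def Suc_le_eq)
qed

lemma candidate_gap_bound:
  assumes inv: "run_invariant (t, I, k, xs, dI)"
    and accept: "\<not> gap_est (precond k) (candidate k I t xs) / dI > c * r^(Suc t - I)"
  shows "gap (candidate k I t xs) \<le> \<alpha> * growth^K * r^(Suc t) * gap x0"
proof -
  have "I \<le> t" "k \<le> K" and dI: "dI = gap_est (precond k) (xs ! I)"
    and epoch: "drop I xs = pfom_list \<psi> (precond k) (xs ! I) (t - I)"
    and gap_I: "gap (xs ! I) \<le> growth^k * r^I * gap x0"
    using inv by (simp_all add: run_invariant_def)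
  obtain G where G: "gap (candidate k I t xs) \<le> G * r^(Suc t - I) * gap (xs ! I)"
    and "0 \<le> G" and G_le: "G * growth^k \<le> \<alpha> * growth^K"
  proof (cases "k = K")
    case True
    then show ?thesis
      using that[of \<alpha>] last_level_contraction[OF _ \<open>I \<le> t\<close>] epoch \<alpha>_ge_1 by simp
  next
    case False
    then have "k < K"
      using \<open>k \<le> K\<close> by simp
    moreover have "growth * growth^k \<le> \<alpha> * growth^K"
    proof -
      have "growth * growth^k \<le> growth^K"
        using growth_ge_1 \<open>k < K\<close> power_increasing[of "Suc k" K growth] by simp
      also have "\<dots> \<le> \<alpha> * growth^K"
        using \<alpha>_ge_1 growth_ge_1 by (intro le_mult_if_one_le) simp_all
      finally show ?thesis .
    qed
    ultimately show ?thesis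
      using that[of growth] early_level_accepted_bound[OF _ epoch] accept dI growth_ge_1 by simp
  qed
  note G
  also have "G * r^(Suc t - I) * gap (xs ! I) \<le> G * r^(Suc t - I) * (growth^k * r^I * gap x0)"
    using gap_I \<open>0 \<le> G\<close> r_pos by (intro mult_left_mono) simp_all
  also have "\<dots> = (G * growth^k) * (r^(Suc t - I) * r^I) * gap x0"
    by (simp add: mult_ac)
  also have "r^(Suc t - I) * r^I = r^(Suc t)"
    using \<open>I \<le> t\<close> by (simp add: power_add[symmetric])
  also have "(G * growth^k) * r^(Suc t) * gap x0 \<le> \<alpha> * growth^K * r^(Suc t) * gap x0"
    using G_le r_pos gap_nonneg[of x0] by (simp add: mult_right_mono)
  finally show ?thesis .
qed

lemma run_invariant_accept:
  assumes inv: "run_invariant (t, I, k, xs, dI)"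
    and accept: "\<not> gap_est (precond k) (candidate k I t xs) / dI > c * r^(Suc t - I)"
  shows "run_invariant (Suc t, I, k, xs @ [candidate k I t xs], dI)"
proof -
  define xp where "xp = candidate k I t xs"
  have len: "length xs = Suc t" and "I \<le> t" and dI: "dI = gap_est (precond k) (xs ! I)"
    and epoch: "drop I xs = pfom_list \<psi> (precond k) (xs ! I) (t - I)"
    and early: "k < K \<longrightarrow> (\<forall>s. I \<le> s \<and> s \<le> t \<longrightarrow> gap (xs ! s) \<le> growth * r^(s - I) * gap (xs ! I))"
    and all: "\<forall>s\<le>t. gap (xs ! s) \<le> \<alpha> * growth^K * r^s * gap x0"
    using inv by (simp_all add: run_invariant_def)
  have nth_old: "(xs @ [xp]) ! s = xs ! s" if "s \<le> t" for s
    using len that by (simp add: nth_append)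
  have nth_new: "(xs @ [xp]) ! Suc t = xp"
    using len by (simp add: nth_append)
  have "drop I (xs @ [xp]) = pfom_list \<psi> (precond k) (xs ! I) (Suc t - I)"
    using len \<open>I \<le> t\<close> epoch by (simp add: xp_def candidate_def Suc_diff_le)
  moreover have "k < K \<longrightarrow> (\<forall>s. I \<le> s \<and> s \<le> Suc t \<longrightarrow>
      gap ((xs @ [xp]) ! s) \<le> growth * r^(s - I) * gap (xs ! I))"
    using early early_level_accepted_bound[OF _ epoch] accept dI nth_old nth_new
    by (auto simp: xp_def le_Suc_eq)
  moreover have "\<forall>s\<le>Suc t. gap ((xs @ [xp]) ! s) \<le> \<alpha> * growth^K * r^s * gap x0"
    using all candidate_gap_bound[OF inv accept] nth_old nth_new by (auto simp: xp_def le_Suc_eq)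
  ultimately show ?thesis
    using inv nth_old[of 0] nth_old[OF \<open>I \<le> t\<close>] by (simp add: run_invariant_def xp_def)
qed

lemma run_invariant_step:
  assumes "run_invariant st"
  shows "run_invariant (alg_step A b \<Lambda> \<nu> \<psi> c r m_init \<omega> T st)"
proof -
  obtain t I k xs dI where st: "st = (t, I, k, xs, dI)"
    by (cases st) auto
  show ?thesis
    using assms run_invariant_restart[of t I k xs dI] run_invariant_accept[of t I k xs dI]
    by (simp add: st alg_step_def Let_def candidate_def precond_def)
qed

lemma run_invariant_alg_run: "run_invariant (alg_run A b \<Lambda> \<nu> \<psi> c r m_init \<omega> T x0 j)"
proof (induction j)
  case 0
  show ?case
    using run_invariant_init by (simp add: alg_run_def)
next
  case (Suc j)
  then show ?case
    using run_invariant_step by (simp add: alg_run_def)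
qed

lemma alg_run_bounds:
  assumes "alg_run A b \<Lambda> \<nu> \<psi> c r m_init \<omega> T x0 j = (t, I, k, xs, dI)"
  shows "k \<le> K"
    and "s \<le> t \<Longrightarrow> gap (xs ! s) / gap (xs ! 0)
      \<le> \<alpha> * r^s * (c * ((sigma_max A)^2 + \<nu>^2) / \<nu>^2)^K * 2^(K^2)"
proof -
  have inv: "run_invariant (t, I, k, xs, dI)"
    using run_invariant_alg_run[of T j] assms by simp
  then show "k \<le> K"
    by (simp add: run_invariant_def)
  assume "s \<le> t"
  have "growth^K = ((2::real)^K)^K * (c * \<kappa>)^K"
    by (simp add: growth_def power_mult_distrib mult.assoc)
  also have "((2::real)^K)^K = 2^(K^2)"
    by (simp add: power_mult[symmetric] power2_eq_square)
  also have "c * \<kappa> = c * ((sigma_max A)^2 + \<nu>^2) / \<nu>^2"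
    by (simp add: \<kappa>_def)
  finally have "growth^K = (c * ((sigma_max A)^2 + \<nu>^2) / \<nu>^2)^K * 2^(K^2)"
    by (simp add: mult.commute)
  moreover have "0 \<le> \<alpha> * growth^K * r^s"
    using \<alpha>_ge_1 growth_ge_1 r_pos by simp
  ultimately show "gap (xs ! s) / gap (xs ! 0)
      \<le> \<alpha> * r^s * (c * ((sigma_max A)^2 + \<nu>^2) / \<nu>^2)^K * 2^(K^2)"
    using inv \<open>s \<le> t\<close> gap_nonneg[of x0]
    by (simp add: run_invariant_def divide_le_if_le_mult mult_ac)
qed

end

section \<open>Good sketches are likely\<close>

lemma prob_PiM_all_le:
  fixes M :: "nat \<Rightarrow> 'a measure" and G :: "nat \<Rightarrow> 'a set"
  assumes prob: "\<And>k. prob_space (M k)"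
    and G: "\<And>k. k \<le> K \<Longrightarrow> G k \<in> sets (M k)"
    and G_prob: "\<And>k. k \<le> K \<Longrightarrow> 1 - \<delta> \<le> measure (M k) (G k)"
  defines "E \<equiv> {\<omega> \<in> space (PiM UNIV M). \<forall>k\<in>{..K}. \<omega> k \<in> G k}"
  shows "E \<in> sets (PiM UNIV M)" and "1 - (1 + real K) * \<delta> \<le> measure (PiM UNIV M) E"
proof -
  interpret product_prob_space M UNIV
    by (simp add: product_prob_space_def product_prob_space_axioms_def product_sigma_finite_def
        prob prob_space_imp_sigma_finite)
  define B where "B k = {\<omega> \<in> space (PiM UNIV M). \<omega> k \<in> G k}" for k
  have B: "B k \<in> sets (PiM UNIV M)" if "k \<le> K" for k
    unfolding B_def using G[OF that] by (intro sets_Collect_single') auto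
  have "measure (PiM UNIV M) (B k) = measure (M k) (G k)" if "k \<le> K" for k
    unfolding B_def using emeasure_PiM_Collect_single[of k "G k"] G[OF that]
    by (simp add: measure_def)
  then have compl_B: "measure (PiM UNIV M) (space (PiM UNIV M) - B k) \<le> \<delta>" if "k \<le> K" for k
    using P.prob_compl[OF B[OF that]] G_prob[OF that] that by simp
  show E: "E \<in> sets (PiM UNIV M)"
    unfolding E_def using B unfolding B_def by (intro sets.sets_Collect_finite_All) auto
  have compl_E: "space (PiM UNIV M) - E = (\<Union>k\<le>K. space (PiM UNIV M) - B k)"
    unfolding E_def B_def by auto
  have "measure (PiM UNIV M) (space (PiM UNIV M) - E)
      \<le> (\<Sum>k\<le>K. measure (PiM UNIV M) (space (PiM UNIV M) - B k))"
    unfolding compl_E using B by (intro P.finite_measure_subadditive_finite) auto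
  also have "\<dots> \<le> (1 + real K) * \<delta>"
    using sum_mono[of "{..K}" _ "\<lambda>_. \<delta>"] compl_B by simp
  finally show "1 - (1 + real K) * \<delta> \<le> measure (PiM UNIV M) E"
    using P.prob_compl[OF E] by simp
qed

lemma crit_size_mem:
  assumes "crit_set A \<Lambda> \<nu> D \<delta> \<noteq> {}"
  shows "1 \<le> crit_size A \<Lambda> \<nu> D \<delta>"
    and "\<And>\<rho> m. 0 < \<rho> \<Longrightarrow> 1 \<le> m \<Longrightarrow> real (crit_size A \<Lambda> \<nu> D \<delta>) \<le> \<rho> * real m \<Longrightarrow>
      1 - \<delta> \<le> measure (D m) {S \<in> space (D m). sketch_event A \<Lambda> \<nu> \<rho> m S}"
proof -
  have "crit_size A \<Lambda> \<nu> D \<delta> \<in> crit_set A \<Lambda> \<nu> D \<delta>"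
    unfolding crit_size_def using assms by (rule Inf_nat_def1)
  then show "1 \<le> crit_size A \<Lambda> \<nu> D \<delta>"
    and "\<And>\<rho> m. 0 < \<rho> \<Longrightarrow> 1 \<le> m \<Longrightarrow> real (crit_size A \<Lambda> \<nu> D \<delta>) \<le> \<rho> * real m \<Longrightarrow>
      1 - \<delta> \<le> measure (D m) {S \<in> space (D m). sketch_event A \<Lambda> \<nu> \<rho> m S}"
    by (auto simp: crit_set_def divide_le_eq mult.commute)
qed

text \<open>The accuracy that the critical sketch size guarantees, with probability \<open>1 - \<delta>\<close>,
  for the \<open>k\<close>-th sketch, of size \<open>m_init * 2^k\<close>.\<close>

definition level_accuracy :: "nat \<Rightarrow> nat \<Rightarrow> real \<Rightarrow> nat \<Rightarrow> real" where
  "level_accuracy m\<delta> m_init \<rho> k = max \<rho> (real m\<delta> / real (m_init * 2^k))"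

lemma good_sketches_prob:
  assumes "\<And>m. 1 \<le> m \<Longrightarrow> prob_space (D m)"
    and crit: "crit_set A \<Lambda> \<nu> D \<delta> \<noteq> {}" and "\<delta> < 1" and "0 < \<rho>" and "1 \<le> m_init"
  defines "M \<equiv> PiM UNIV (\<lambda>k. D (m_init * 2^k))"
  shows "\<exists>E \<in> sets M. 1 - (1 + real K) * \<delta> \<le> measure M E \<and>
    (\<forall>\<omega>\<in>E. \<forall>k\<le>K. sketch_event A \<Lambda> \<nu> (level_accuracy (crit_size A \<Lambda> \<nu> D \<delta>) m_init \<rho> k)
       (m_init * 2^k) (\<omega> k))"
proof -
  define G where "G k = {S \<in> space (D (m_init * 2^k)).
    sketch_event A \<Lambda> \<nu> (level_accuracy (crit_size A \<Lambda> \<nu> D \<delta>) m_init \<rho> k) (m_init * 2^k) S}" for k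
  have size: "1 \<le> m_init * 2^k" for k
    using \<open>1 \<le> m_init\<close> by (simp add: Suc_le_eq)
  have "real (crit_size A \<Lambda> \<nu> D \<delta>)
      \<le> level_accuracy (crit_size A \<Lambda> \<nu> D \<delta>) m_init \<rho> k * real (m_init * 2^k)" for k
  proof -
    have "real (crit_size A \<Lambda> \<nu> D \<delta>)
        = real (crit_size A \<Lambda> \<nu> D \<delta>) / real (m_init * 2^k) * real (m_init * 2^k)"
      using size[of k] by simp
    also have "\<dots> \<le> level_accuracy (crit_size A \<Lambda> \<nu> D \<delta>) m_init \<rho> k * real (m_init * 2^k)"
      by (intro mult_right_mono) (auto simp: level_accuracy_def)
    finally show ?thesis .
  qed
  moreover have "0 < level_accuracy (crit_size A \<Lambda> \<nu> D \<delta>) m_init \<rho> k" for k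
    using \<open>0 < \<rho>\<close> by (simp add: level_accuracy_def)
  ultimately have G_prob: "1 - \<delta> \<le> measure (D (m_init * 2^k)) (G k)" for k
    unfolding G_def using crit_size_mem(2)[OF crit _ size] by blast
  have "G k \<in> sets (D (m_init * 2^k))" for k
    using G_prob[of k] \<open>\<delta> < 1\<close> measure_notin_sets[of "G k"] by fastforce
  from prob_PiM_all_le[of "\<lambda>k. D (m_init * 2^k)" K G \<delta>, OF assms(1)[OF size] this G_prob]
  show ?thesis
    unfolding M_def G_def by (intro bexI[rotated]) auto
qed

definition max_restarts :: "nat \<Rightarrow> nat \<Rightarrow> real \<Rightarrow> nat" where
  "max_restarts m\<delta> m_init \<rho> = nat \<lceil>max 0 (log 2 (real m\<delta> / (real m_init * \<rho>)))\<rceil>"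

lemma level_accuracy_max_restarts:
  assumes "0 < \<rho>" and "1 \<le> m_init" and "1 \<le> m\<delta>"
  shows "level_accuracy m\<delta> m_init \<rho> (max_restarts m\<delta> m_init \<rho>) = \<rho>"
proof -
  define K where "K = max_restarts m\<delta> m_init \<rho>"
  have "real m\<delta> / (real m_init * \<rho>) \<le> 2^K"
    unfolding K_def max_restarts_def using assms by (intro ceiling_log2_bounds(1)) simp
  then have "real m\<delta> / real (m_init * 2^K) \<le> \<rho>"
    using assms by (simp add: field_simps)
  then show ?thesis
    by (simp add: level_accuracy_def K_def)
qed

lemma level_accuracy_distortion:
  assumes "0 < \<rho>" and "\<rho> < 1/4" and "1 \<le> m_init" and "1 \<le> m\<delta>"
    and "k < max_restarts m\<delta> m_init \<rho>"
  shows "1 + max (sqrt (level_accuracy m\<delta> m_init \<rho> k)) (level_accuracy m\<delta> m_init \<rho> k)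
    \<le> 2 ^ max_restarts m\<delta> m_init \<rho>"
proof -
  define K where "K = max_restarts m\<delta> m_init \<rho>"
  define a where "a = level_accuracy m\<delta> m_init \<rho> k"
  have "1 \<le> K"
    using assms(5) by (simp add: K_def)
  then have "(2::real)^1 \<le> 2^K"
    by (rule power_increasing) simp
  then have "2 \<le> (2::real)^K"
    by simp
  have "real m\<delta> / real (m_init * 2^k) \<le> real m\<delta> / real m_init"
    using assms(3) by (intro divide_left_mono) auto
  also have "\<dots> = real m\<delta> / (real m_init * \<rho>) * \<rho>"
    using assms(1,3) by simp
  also have "\<dots> \<le> 2^K * \<rho>"
    unfolding K_def max_restarts_def using assms
    by (intro mult_right_mono ceiling_log2_bounds(1)) auto
  also have "\<dots> \<le> 2^K * (1/4)"
    using assms(2) by (intro mult_left_mono) auto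
  finally have "a \<le> 2^K / 4"
    using assms(2) \<open>2 \<le> 2^K\<close> by (auto simp: a_def level_accuracy_def max_def)
  then show ?thesis
    using \<open>2 \<le> 2^K\<close> unfolding a_def K_def by (rule one_plus_max_sqrt_le)
qed

lemma sketch_size_le:
  assumes "0 < \<rho>" and "1 \<le> m_init" and "1 \<le> m\<delta>" and "k \<le> max_restarts m\<delta> m_init \<rho>"
  shows "real (m_init * 2^k) \<le> max (real m_init) (2 * real m\<delta> / \<rho>)"
proof (cases "k = 0")
  case False
  define K where "K = max_restarts m\<delta> m_init \<rho>"
  have "(2::real)^k \<le> 2^K"
    using assms(4) by (simp add: K_def power_increasing)
  then have "real (m_init * 2^k) \<le> real m_init * 2^K"
    by (simp add: mult_left_mono)
  also have "\<dots> < real m_init * (2 * (real m\<delta> / (real m_init * \<rho>)))"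
    using False assms unfolding K_def max_restarts_def
    by (intro mult_strict_left_mono ceiling_log2_bounds(2)) auto
  also have "\<dots> = 2 * real m\<delta> / \<rho>"
    using assms(2) by (simp add: field_simps)
  finally show ?thesis
    by simp
qed simp

context regularized_quadratic
begin

lemma alg_run_guarantee:
  assumes pfom: "is_pfom A b \<Lambda> \<nu> \<psi>" and lin_conv: "lin_conv A b \<Lambda> \<nu> \<psi> \<rho> r \<alpha>" and "0 < r"
    and "0 < \<rho>" and "\<rho> < 1/4" and "1 \<le> m_init" and "1 \<le> m\<delta>"
    and good: "\<forall>k\<le>max_restarts m\<delta> m_init \<rho>.
      sketch_event A \<Lambda> \<nu> (level_accuracy m\<delta> m_init \<rho> k) (m_init * 2^k) (\<omega> k)"
  shows "case alg_run A b \<Lambda> \<nu> \<psi> (c_const \<alpha> \<rho>) r m_init \<omega> T x0 j of (t, I, k, xs, dI) \<Rightarrow>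
     real (m_init * 2^k) \<le> max (real m_init) (2 * real m\<delta> / \<rho>) \<and>
     k \<le> max_restarts m\<delta> m_init \<rho> \<and>
     (\<forall>s\<le>t. subopt A b \<Lambda> \<nu> (xs ! s) / subopt A b \<Lambda> \<nu> (xs ! 0)
        \<le> \<alpha> * r ^ s * (c_const \<alpha> \<rho> * ((sigma_max A)^2 + \<nu>^2) / \<nu>^2) ^ max_restarts m\<delta> m_init \<rho>
          * 2 ^ (max_restarts m\<delta> m_init \<rho>)^2)"
proof -
  define K where "K = max_restarts m\<delta> m_init \<rho>"
  have last: "sketch_event A \<Lambda> \<nu> \<rho> (m_init * 2^K) (\<omega> K)"
    using good level_accuracy_max_restarts[OF \<open>0 < \<rho>\<close> \<open>1 \<le> m_init\<close> \<open>1 \<le> m\<delta>\<close>]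
    by (auto simp: K_def)
  have early: "x \<bullet> (H_S (m_init * 2^k) (\<omega> k) *v x) \<le> 2^K * (x \<bullet> (H *v x))" if "k < K" for k x
  proof -
    define a where "a = level_accuracy m\<delta> m_init \<rho> k"
    have "x \<bullet> (H_S (m_init * 2^k) (\<omega> k) *v x) \<le> (1 + max (sqrt a) a) * (x \<bullet> (H *v x))"
      using sketch_event_quadratic_bounds[of a "m_init * 2^k" "\<omega> k" x] good that
      by (auto simp: K_def a_def algebra_simps abs_le_iff)
    also have "\<dots> \<le> 2^K * (x \<bullet> (H *v x))"
      using level_accuracy_distortion[OF \<open>0 < \<rho>\<close> \<open>\<rho> < 1/4\<close> \<open>1 \<le> m_init\<close> \<open>1 \<le> m\<delta>\<close>, of k]
        that pos_def_psd[OF pos_def_H, of x]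
      by (intro mult_right_mono) (auto simp: K_def a_def)
    finally show ?thesis .
  qed
  have "adaptive_sketch_run A b \<Lambda> \<nu> \<psi> \<rho> r \<alpha> K m_init \<omega>"
    by (intro adaptive_sketch_run.intro adaptive_sketch_run_axioms.intro regularized_quadratic_axioms)
      (use pfom lin_conv \<open>0 < r\<close> \<open>0 < \<rho>\<close> \<open>\<rho> < 1/4\<close> \<open>1 \<le> m_init\<close> last early in auto)
  then interpret adaptive_sketch_run A b \<Lambda> \<nu> \<psi> \<rho> r \<alpha> K m_init \<omega> x0 .
  obtain t I k xs dI where run: "alg_run A b \<Lambda> \<nu> \<psi> c r m_init \<omega> T x0 j = (t, I, k, xs, dI)"
    by (cases "alg_run A b \<Lambda> \<nu> \<psi> c r m_init \<omega> T x0 j") auto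
  show ?thesis
    using alg_run_bounds[OF run] sketch_size_le[OF \<open>0 < \<rho>\<close> \<open>1 \<le> m_init\<close> \<open>1 \<le> m\<delta>\<close>]
    by (simp add: run K_def[symmetric])
qed

end

theorem theorem4p1:
  fixes A :: "real^'d^'n" and b :: "real^'d" and \<Lambda> :: "real^'d^'d"
    and \<nu> \<rho> \<alpha> \<delta> :: real and \<phi> :: "real \<Rightarrow> real"
    and \<psi> :: "'d pfom" and D :: "nat \<Rightarrow> (nat \<Rightarrow> real^'n) measure"
    and m_init T :: nat and x0 :: "real^'d"
  assumes "CARD('d) \<le> CARD('n)"
    and "\<forall>i j. i \<noteq> j \<longrightarrow> \<Lambda> $ i $ j = 0"
    and "\<forall>x. x \<bullet> x \<le> x \<bullet> (\<Lambda> *v x)"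
    and "\<nu> > 0"
    and "0 < \<rho>" and "\<rho> < 1/4"
    and "\<forall>r\<in>{0<..<1}. 0 < \<phi> r"
    and "\<alpha> \<ge> 0"
    and "is_pfom A b \<Lambda> \<nu> \<psi>"
    and "lin_conv A b \<Lambda> \<nu> \<psi> \<rho> (\<phi> \<rho>) \<alpha>"
    and "0 < \<delta>" and "\<delta> < 1"
    and "\<forall>m\<ge>1. prob_space (D m) \<and> sets (D m) = sets borel"
    and "crit_set A \<Lambda> \<nu> D \<delta> \<noteq> {}"
    and "m_init \<ge> 1"
  shows "let m\<delta> = crit_size A \<Lambda> \<nu> D \<delta>;
             Kmax = nat \<lceil>max 0 (log 2 (real m\<delta> / (real m_init * \<rho>)))\<rceil>;
             c = c_const \<alpha> \<rho>;
             \<sigma>1 = sigma_max A;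
             M = PiM UNIV (\<lambda>k. D (m_init * 2^k))
         in \<exists>E \<in> sets M. measure M E \<ge> 1 - (1 + real Kmax) * \<delta> \<and>
              (\<forall>\<omega>\<in>E. \<forall>j. case alg_run A b \<Lambda> \<nu> \<psi> c (\<phi> \<rho>) m_init \<omega> T x0 j of
                 (t, I, k, xs, dI) \<Rightarrow>
                   real (m_init * 2^k) \<le> max (real m_init) (2 * real m\<delta> / \<rho>) \<and>
                   k \<le> Kmax \<and>
                   (\<forall>s\<le>t. subopt A b \<Lambda> \<nu> (xs ! s) / subopt A b \<Lambda> \<nu> (xs ! 0)
                      \<le> \<alpha> * \<phi> \<rho> ^ s * (c * (\<sigma>1^2 + \<nu>^2) / \<nu>^2) ^ Kmax * 2 ^ (Kmax^2)))"
proof -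
  interpret regularized_quadratic A b \<Lambda> \<nu>
    by (rule regularized_quadratic.intro[OF diagonal_matrix_symmetric[OF assms(2)] assms(3,4)])
  define m\<delta> where "m\<delta> = crit_size A \<Lambda> \<nu> D \<delta>"
  define M where "M = PiM UNIV (\<lambda>k. D (m_init * 2^k))"
  have "1 \<le> m\<delta>"
    using crit_size_mem(1)[OF assms(14)] by (simp add: m\<delta>_def)
  have "0 < \<phi> \<rho>"
    using assms(5-7) by simp
  obtain E where E: "E \<in> sets M" "1 - (1 + real (max_restarts m\<delta> m_init \<rho>)) * \<delta> \<le> measure M E"
    and good: "\<And>\<omega>. \<omega> \<in> E \<Longrightarrow> \<forall>k\<le>max_restarts m\<delta> m_init \<rho>.
      sketch_event A \<Lambda> \<nu> (level_accuracy m\<delta> m_init \<rho> k) (m_init * 2^k) (\<omega> k)"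
    using good_sketches_prob[OF _ assms(14,12,5,15), of "max_restarts m\<delta> m_init \<rho>"] assms(13)
    unfolding M_def m\<delta>_def by blast
  show ?thesis
    unfolding Let_def m\<delta>_def[symmetric] M_def[symmetric] max_restarts_def[symmetric]
  proof (intro bexI[of _ E] conjI ballI allI)
  qed (rule E alg_run_guarantee[OF assms(9,10) \<open>0 < \<phi> \<rho>\<close> assms(5,6,15) \<open>1 \<le> m\<delta>\<close> good] | assumption)+
qed

end
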